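(* Let $A=(Q,\Sigma,T,q_0,Q_a,Q_r,\delta)$ be a simplified QPA-structure with reduced transition function $\varphi$. Then its evolution operator $U_A$ is unitary if and only if all the following hold: (1) for all $(q_1,\sigma_1,\tau_1)\in Q\times\Gamma\times\Delta$: $\sum_{(q,\omega)\in Q\times\Delta^*}|\varphi(q_1,\sigma_1,\tau_1,q,\omega)|^2=1$; (2) for all triples $(q_1,\sigma_1,\tau_1)\ne(q_2,\sigma_1,\tau_2)$ in $Q\times\Gamma\times\Delta$: $\sum_{(q,\omega)\in Q\times\Delta^*}\varphi^*(q_1,\sigma_1,\tau_1,q,\omega)\varphi(q_2,\sigma_1,\tau_2,q,\omega)=0$; (3) for all $(q_1,\sigma_1,\tau_1,\tau_2)\in Q\times\Gamma\times\Delta^2$: $\sum_{(q,\tau,\omega)\in Q\times\Delta\times\{\varepsilon,\tau_2,\tau_1\tau_2\}}|\varphi(q,\sigma_1,\tau,q_1,\omega)|^2=1$; (4) for all $(q_1,\sigma_1,\tau_1),(q_2,\sigma_1,\tau_2)\in Q\times\Gamma\times\Delta$ and all $\tau_3\in\Delta$: (a) $\sum_{(q,\tau)\in Q\times\Delta}\varphi^*(q_1,\sigma_1,\tau_1,q,\tau)\varphi(q_2,\sigma_1,\tau_2,q,\tau_3\tau)+\sum_{q\in Q}\varphi^*(q_1,\sigma_1,\tau_1,q,\varepsilon)\varphi(q_2,\sigma_1,\tau_2,q,\tau_3)=0$ and (b) $\sum_{q\in Q}\varphi^*(q_1,\sigma_1,\tau_1,q,\varepsilon)\varphi(q_2,\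sigma_1,\tau_2,q,\tau_2\tau_3)=0$.
   Context: $z^*$ is complex conjugate, $\varepsilon$ the empty word; an operator $U$ is unitary if $UU^*=U^*U=I$. A QPA-structure is a tuple $A=(Q,\Sigma,T,q_0,Q_a,Q_r,\delta)$ with $Q$ a finite set of states, $\Sigma$ a finite input alphabet, $T$ a finite stack alphabet, $q_0\in Q$, $Q_a,Q_r\subset Q$ disjoint, $\Gamma=\Sigma\cup\{\#,\$\}$ (end-markers not in $\Sigma$), $\Delta=T\cup\{Z_0\}$ ($Z_0\notin T$), and $\delta:Q\times\Gamma\times\Delta\times Q\times\{\downarrow,\to\}\times\Delta^*\to\mathbb{C}$ with values of modulus at most $1$, such that whenever $\delta(q,\alpha,\beta,q',d,\omega)\ne0$: $|\omega|\le2$; if $|\omega|=2$ then $\omega_1=\beta$; if $\beta=Z_0$ then $\omega\in Z_0T^*$; if $\beta\ne Z_0$ then $\omega\in T^*$. A configuration is $|\nu_i q_j\nu_k,\omega_l\rangle$ with $q_j\in Q$, $\nu_i\nu_k\in\#\Sigma^*\$$, input head on the first symbol of $\nu_k$, $\omega_l\in Z_0T^*$ the stack with head on its last symbol; $C$ is the set of configurations, $H_A=\ell_2(C)$. The evolution operator is defined on basis vectors: for $c=|\nu_i q_j\sigma\nu_k,\omega_l\tau\rangle$, $U_A|c\rangle=\sum_{(q,d,\omega)}\delta(q_j,\sigma,\tau,q,d,\omega)|f(c,d,q),\omega_l\omega\rangle$, where $f(c,\downarrow,q)=\nu_i q\sigma\nu_k$, $f(c,\to,q)=\nu_i\sigma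 q\nu_k$. The QPA-structure is simplified if there is a function $D:Q\to\{\downarrow,\to\}$ such that $\delta(q_1,\sigma,\tau,q,d,\omega)=0$ whenever $D(q)\ne d$; its reduced transition function is $\varphi(q_1,\sigma,\tau,q,\omega)=\delta(q_1,\sigma,\tau,q,D(q),\omega)$. *)

theory Defs
  imports "HOL-Analysis.Analysis"
begin

text \<open>Tape symbols Gamma = Sigma plus the end-markers # (LEnd) and $ (REnd).
  Stack symbols Delta = T plus Z0, rendered as 't option with None = Z0.\<close>

datatype 'a tsym = LEnd | REnd | Inp 'a

datatype dir = Stay | Right

definition gamma_set :: "'a set \<Rightarrow> 'a tsym set" where
  "gamma_set Sig = {LEnd, REnd} \<union> Inp ` Sig"

definition delta_set :: "'t set \<Rightarrow> 't option set" where
  "delta_set T = insert None (Some ` T)"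

definition Z0T_star :: "'t set \<Rightarrow> 't option list set" where
  "Z0T_star T = {s. s \<noteq> [] \<and> hd s = None \<and> tl s \<in> lists (Some ` T)}"

type_synonym ('q, 'a, 't) trans =
  "'q \<Rightarrow> 'a tsym \<Rightarrow> 't option \<Rightarrow> 'q \<Rightarrow> dir \<Rightarrow> 't option list \<Rightarrow> complex"

definition qpa_structure ::
  "'q set \<Rightarrow> 'a set \<Rightarrow> 't set \<Rightarrow> 'q \<Rightarrow> 'q set \<Rightarrow> 'q set \<Rightarrow> ('q, 'a, 't) trans \<Rightarrow> bool" where
  "qpa_structure Q Sig T q0 Qa Qr \<delta> \<longleftrightarrow>
     finite Q \<and> finite Sig \<and> finite T \<and> q0 \<in> Q \<and> Qa \<subseteq> Q \<and> Qr \<subseteq> Q \<and> Qa \<inter> Qr = {} \<and>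
     (\<forall>q\<in>Q. \<forall>\<alpha>\<in>gamma_set Sig. \<forall>\<beta>\<in>delta_set T. \<forall>q'\<in>Q. \<forall>d. \<forall>\<omega>\<in>lists (delta_set T).
        cmod (\<delta> q \<alpha> \<beta> q' d \<omega>) \<le> 1 \<and>
        (\<delta> q \<alpha> \<beta> q' d \<omega> \<noteq> 0 \<longrightarrow>
           length \<omega> \<le> 2 \<and>
           (length \<omega> = 2 \<longrightarrow> \<omega> ! 0 = \<beta>) \<and>
           (\<beta> = None \<longrightarrow> \<omega> \<in> Z0T_star T) \<and>
           (\<beta> \<noteq> None \<longrightarrow> \<omega> \<in> lists (Some ` T))))"

text \<open>Configurations: (input word w, head position p on the tape # w $, state, stack).
  The stack is a list whose last element is the stack head.\<close>
type_synonym ('q, 'a, 't) config = "'a list \<times> nat \<times> 'q \<times> 't option list"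

definition configs :: "'q set \<Rightarrow> 'a set \<Rightarrow> 't set \<Rightarrow> ('q, 'a, 't) config set" where
  "configs Q Sig T = {(w, p, q, s). w \<in> lists Sig \<and> p < length w + 2 \<and> q \<in> Q \<and> s \<in> Z0T_star T}"

definition tape :: "'a list \<Rightarrow> 'a tsym list" where
  "tape w = LEnd # map Inp w @ [REnd]"

text \<open>Head movement; the tape is read circularly (moving right from $ returns to #).\<close>
definition move :: "'a list \<Rightarrow> nat \<Rightarrow> dir \<Rightarrow> nat" where
  "move w p d = (case d of Stay \<Rightarrow> p | Right \<Rightarrow> Suc p mod (length w + 2))"

text \<open>Matrix entry: coefficient of basis vector c' in U_A applied to basis vector c.\<close>
definition evol_amp ::
  "'q set \<Rightarrow> 't set \<Rightarrow> ('q, 'a, 't) trans \<Rightarrow> ('q, 'a, 't) config \<Rightarrow> ('q, 'a, 't) config \<Rightarrow> complex" where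
  "evol_amp Q T \<delta> c c' = (case c of (w, p, q1, s) \<Rightarrow>
     infsum (\<lambda>(q, d, \<omega>). if c' = (w, move w p d, q, butlast s @ \<omega>)
                          then \<delta> q1 (tape w ! p) (last s) q d \<omega> else 0)
            (Q \<times> UNIV \<times> lists (delta_set T)))"

definition l2 :: "'c set \<Rightarrow> ('c \<Rightarrow> complex) set" where
  "l2 C = {x. (\<forall>c. c \<notin> C \<longrightarrow> x c = 0) \<and> (\<lambda>c. (cmod (x c))\<^sup>2) summable_on C}"

definition ip :: "'c set \<Rightarrow> ('c \<Rightarrow> complex) \<Rightarrow> ('c \<Rightarrow> complex) \<Rightarrow> complex" where
  "ip C x y = infsum (\<lambda>c. cnj (x c) * y c) C"

definition evol_op ::
  "'q set \<Rightarrow> 'a set \<Rightarrow> 't set \<Rightarrow> ('q, 'a, 't) trans \<Rightarrow>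
   (('q, 'a, 't) config \<Rightarrow> complex) \<Rightarrow> (('q, 'a, 't) config \<Rightarrow> complex)" where
  "evol_op Q Sig T \<delta> x = (\<lambda>c'. if c' \<in> configs Q Sig T
      then infsum (\<lambda>c. x c * evol_amp Q T \<delta> c c') (configs Q Sig T) else 0)"

definition unitary_on ::
  "('c \<Rightarrow> complex) set \<Rightarrow> (('c \<Rightarrow> complex) \<Rightarrow> ('c \<Rightarrow> complex) \<Rightarrow> complex) \<Rightarrow>
   (('c \<Rightarrow> complex) \<Rightarrow> ('c \<Rightarrow> complex)) \<Rightarrow> bool" where
  "unitary_on H ipr U \<longleftrightarrow> (\<forall>x\<in>H. U x \<in> H) \<and>
     (\<exists>V. (\<forall>y\<in>H. V y \<in> H) \<and> (\<forall>x\<in>H. \<forall>y\<in>H. ipr (U x) y = ipr x (V y)) \<and>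
          (\<forall>x\<in>H. V (U x) = x) \<and> (\<forall>x\<in>H. U (V x) = x))"

definition qpa_simplified ::
  "'q set \<Rightarrow> 'a set \<Rightarrow> 't set \<Rightarrow> ('q, 'a, 't) trans \<Rightarrow> ('q \<Rightarrow> dir) \<Rightarrow> bool" where
  "qpa_simplified Q Sig T \<delta> D \<longleftrightarrow>
     (\<forall>q1\<in>Q. \<forall>\<sigma>\<in>gamma_set Sig. \<forall>\<tau>\<in>delta_set T. \<forall>q\<in>Q. \<forall>d. \<forall>\<omega>\<in>lists (delta_set T).
        D q \<noteq> d \<longrightarrow> \<delta> q1 \<sigma> \<tau> q d \<omega> = 0)"

definition reduced_trans ::
  "('q, 'a, 't) trans \<Rightarrow> ('q \<Rightarrow> dir) \<Rightarrow> 'q \<Rightarrow> 'a tsym \<Rightarrow> 't option \<Rightarrow> 'q \<Rightarrow> 't option list \<Rightarrow> complex" where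
  "reduced_trans \<delta> D q1 \<sigma> \<tau> q \<omega> = \<delta> q1 \<sigma> \<tau> q (D q) \<omega>"

end

theory Submission
  imports Defs
begin

text \<open>In the basis of configurations, \<open>U\<^sub>A\<close> has a matrix whose rows and columns each have a
  bounded number of nonzero entries, all of modulus at most 1. Such an operator is bounded on
  \<open>\<ell>\<^sub>2\<close>, and it is unitary iff its rows are orthonormal and its columns have norm 1: orthonormal
  rows make it an isometry, and an isometry that maps the conjugate of a unit column onto a unit
  vector with a 1 at that column's index forces the columns to be orthonormal as well.

  Two rows of \<open>U\<^sub>A\<close> can only overlap if the configurations share input word and head position
  and their stacks differ at most in the top three symbols. The inner products of such rows are
  the sums of conditions (1), (2) and (4). The column of a configuration collects its predecessors,
  which are determined by their state, their stack head and the word they pushed, one of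
  \<open>\<epsilon>\<close>, \<open>\<tau>\<^sub>2\<close> and \<open>\<tau>\<^sub>1\<tau>\<^sub>2\<close>; this gives condition (3). Combinations of
  stack symbols that no configuration realizes make the corresponding sums vanish because of the
  constraints on \<open>\<delta>\<close>.\<close>

section \<open>Sparse matrices on \<open>\<ell>\<^sub>2\<close>\<close>

lemma infsum_finite_support:
  assumes "finite S" "S \<subseteq> A" "\<And>x. x \<in> A \<Longrightarrow> x \<notin> S \<Longrightarrow> f x = 0"
  shows "infsum f A = sum f S"
proof -
  have "infsum f A = infsum f S"
    by (rule infsum_cong_neutral) (use assms in auto)
  then show ?thesis using assms by simp
qed

lemma summable_on_finite_support:
  assumes "finite S" "S \<subseteq> A" "\<And>x. x \<in> A \<Longrightarrow> x \<notin> S \<Longrightarrow> f x = 0"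
  shows "f summable_on A"
proof -
  have "f summable_on A \<longleftrightarrow> f summable_on S"
    by (rule summable_on_cong_neutral) (use assms in auto)
  then show ?thesis using assms by simp
qed

lemma cnj_mult_self: "cnj z * z = of_real ((cmod z)\<^sup>2)"
  by (subst mult.commute) (rule complex_norm_square[symmetric])

lemma norm_sum_mult_sq_le:
  fixes x m :: "'i \<Rightarrow> complex"
  assumes "\<And>i. i \<in> S \<Longrightarrow> cmod (m i) \<le> 1"
  shows "(cmod (\<Sum>i\<in>S. x i * m i))\<^sup>2 \<le> card S * (\<Sum>i\<in>S. (cmod (x i))\<^sup>2)"
proof -
  have "cmod (\<Sum>i\<in>S. x i * m i) \<le> (\<Sum>i\<in>S. cmod (x i))"
    by (rule order_trans[OF norm_sum sum_mono]) (use assms in \<open>auto simp: norm_mult mult_left_le\<close>)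
  then have "(cmod (\<Sum>i\<in>S. x i * m i))\<^sup>2 \<le> (\<Sum>i\<in>S. cmod (x i))\<^sup>2"
    by (simp add: power_mono)
  also have "\<dots> \<le> (\<Sum>i\<in>S. (cmod (x i))\<^sup>2) * card S"
    by (rule sum_squared_le_sum_of_squares)
  finally show ?thesis by (simp add: mult.commute)
qed

lemma sum_over_fibres_le:
  fixes g :: "'i \<Rightarrow> real"
  assumes "finite F" "\<And>j. j \<in> F \<Longrightarrow> finite (S j)" "\<And>i. g i \<ge> 0"
    and "\<And>i. i \<in> \<Union>(S ` F) \<Longrightarrow> card {j\<in>F. i \<in> S j} \<le> K"
  shows "(\<Sum>j\<in>F. \<Sum>i\<in>S j. g i) \<le> K * (\<Sum>i\<in>\<Union>(S ` F). g i)"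
proof -
  let ?G = "\<Union>(S ` F)"
  have "(\<Sum>j\<in>F. \<Sum>i\<in>S j. g i) = (\<Sum>j\<in>F. \<Sum>i\<in>?G. if i \<in> S j then g i else 0)"
  proof (rule sum.cong[OF refl])
    fix j assume "j \<in> F"
    then have "?G \<inter> S j = S j" by blast
    then show "(\<Sum>i\<in>S j. g i) = (\<Sum>i\<in>?G. if i \<in> S j then g i else 0)"
      using assms(1,2) by (simp add: sum.inter_restrict[symmetric])
  qed
  also have "\<dots> = (\<Sum>i\<in>?G. g i * card {j\<in>F. i \<in> S j})"
    by (subst sum.swap) (simp add: sum.If_cases assms(1) mult.commute Int_def conj_commute)
  also have "\<dots> \<le> (\<Sum>i\<in>?G. g i * K)"
    using assms(3,4) by (intro sum_mono mult_left_mono) auto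
  finally show ?thesis by (simp add: sum_distrib_left mult.commute)
qed

lemma sparse_transform_in_l2:
  fixes m :: "'c \<Rightarrow> 'c \<Rightarrow> complex" and K :: nat
  assumes S_sub: "\<And>j. j \<in> C \<Longrightarrow> S j \<subseteq> C"
    and S_fin: "\<And>j. j \<in> C \<Longrightarrow> finite (S j)"
    and S_card: "\<And>j. j \<in> C \<Longrightarrow> card (S j) \<le> K"
    and fibre_fin: "\<And>i. i \<in> C \<Longrightarrow> finite {j\<in>C. i \<in> S j}"
    and fibre_card: "\<And>i. i \<in> C \<Longrightarrow> card {j\<in>C. i \<in> S j} \<le> K"
    and m_le: "\<And>i j. i \<in> C \<Longrightarrow> j \<in> C \<Longrightarrow> cmod (m i j) \<le> 1"
    and x: "x \<in> l2 C"
  shows "(\<lambda>j. if j \<in> C then (\<Sum>i\<in>S j. x i * m i j) else 0) \<in> l2 C"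
proof -
  define g where "g = (\<lambda>i. (cmod (x i))\<^sup>2)"
  have g_summable: "g summable_on C" using x by (simp add: l2_def g_def)
  have "(\<Sum>j\<in>F. (cmod (\<Sum>i\<in>S j. x i * m i j))\<^sup>2) \<le> real K * (real K * infsum g C)"
    if F: "F \<subseteq> C" "finite F" for F
  proof -
    have "(\<Sum>j\<in>F. (cmod (\<Sum>i\<in>S j. x i * m i j))\<^sup>2) \<le> (\<Sum>j\<in>F. real K * (\<Sum>i\<in>S j. g i))"
    proof (rule sum_mono)
      fix j assume "j \<in> F"
      then have j: "j \<in> C" using F by blast
      then have "\<And>i. i \<in> S j \<Longrightarrow> cmod (m i j) \<le> 1" using S_sub m_le by blast
      with S_card[OF j] show "(cmod (\<Sum>i\<in>S j. x i * m i j))\<^sup>2 \<le> real K * (\<Sum>i\<in>S j. g i)"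
        unfolding g_def
        by (intro order_trans[OF norm_sum_mult_sq_le] mult_right_mono) (auto intro: sum_nonneg)
    qed
    also have "\<dots> = real K * (\<Sum>j\<in>F. \<Sum>i\<in>S j. g i)" by (simp add: sum_distrib_left)
    also have "(\<Sum>j\<in>F. \<Sum>i\<in>S j. g i) \<le> real K * (\<Sum>i\<in>\<Union>(S ` F). g i)"
    proof (rule sum_over_fibres_le)
      fix i assume "i \<in> \<Union>(S ` F)"
      then have i: "i \<in> C" using F S_sub by blast
      then have "card {j\<in>F. i \<in> S j} \<le> card {j\<in>C. i \<in> S j}"
        using F fibre_fin by (intro card_mono) auto
      then show "card {j\<in>F. i \<in> S j} \<le> K" using fibre_card[OF i] by linarith
    qed (use F S_fin in \<open>auto simp: g_def\<close>)
    also have "(\<Sum>i\<in>\<Union>(S ` F). g i) \<le> infsum g C"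
      using F S_fin S_sub g_summable by (intro finite_sum_le_infsum) (auto simp: g_def)
    finally show ?thesis by (simp add: mult_left_mono)
  qed
  then have "(\<lambda>j. (cmod (\<Sum>i\<in>S j. x i * m i j))\<^sup>2) summable_on C"
    by (intro nonneg_bdd_above_summable_on bdd_aboveI2) auto
  then show ?thesis
    unfolding l2_def by (auto elim!: summable_on_cong[THEN iffD1, rotated])
qed

lemma l2_summable_on_Sigma:
  fixes S :: "'c \<Rightarrow> 'd set" and K :: nat
  assumes S_fin: "\<And>i. i \<in> C \<Longrightarrow> finite (S i)"
    and S_card: "\<And>i. i \<in> C \<Longrightarrow> card (S i) \<le> K"
    and x: "x \<in> l2 C"
  shows "(\<lambda>p. (cmod (x (fst p)))\<^sup>2) summable_on Sigma C S"
proof -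
  define g where "g = (\<lambda>i. (cmod (x i))\<^sup>2)"
  have g_summable: "g summable_on C" using x by (simp add: l2_def g_def)
  have "(\<Sum>p\<in>F. g (fst p)) \<le> real K * infsum g C" if F: "F \<subseteq> Sigma C S" "finite F" for F
  proof -
    have fst_F: "finite (fst ` F)" "fst ` F \<subseteq> C" using F by auto
    have "F \<subseteq> Sigma (fst ` F) S" using F by force
    then have "(\<Sum>p\<in>F. g (fst p)) \<le> (\<Sum>p\<in>Sigma (fst ` F) S. g (fst p))"
      using fst_F S_fin by (intro sum_mono2) (auto simp: g_def)
    also have "\<dots> = (\<Sum>i\<in>fst ` F. \<Sum>j\<in>S i. g i)"
      using fst_F S_fin by (subst sum.Sigma) (auto simp: case_prod_beta)
    also have "\<dots> = (\<Sum>i\<in>fst ` F. real (card (S i)) * g i)" by simp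
    also have "\<dots> \<le> (\<Sum>i\<in>fst ` F. real K * g i)"
      using fst_F S_card by (intro sum_mono mult_right_mono) (auto simp: g_def)
    also have "\<dots> = real K * (\<Sum>i\<in>fst ` F. g i)" by (simp add: sum_distrib_left)
    also have "(\<Sum>i\<in>fst ` F. g i) \<le> infsum g C"
      using g_summable fst_F by (intro finite_sum_le_infsum) (auto simp: g_def)
    finally show ?thesis by (simp add: mult_left_mono)
  qed
  then show ?thesis
    by (intro nonneg_bdd_above_summable_on) (auto simp: g_def intro!: bdd_aboveI2)
qed

text \<open>\<open>a c c'\<close> is the coefficient of the basis vector \<open>c'\<close> in the image of the basis vector \<open>c\<close>,
  so rows are images of basis vectors.\<close>

locale sparse_matrix =
  fixes C :: "'c set" and a :: "'c \<Rightarrow> 'c \<Rightarrow> complex" and K :: nat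
  assumes row_in_carrier: "\<And>c c'. c \<in> C \<Longrightarrow> a c c' \<noteq> 0 \<Longrightarrow> c' \<in> C"
    and finite_row: "\<And>c. c \<in> C \<Longrightarrow> finite {c'. a c c' \<noteq> 0}"
    and card_row_le: "\<And>c. c \<in> C \<Longrightarrow> card {c'. a c c' \<noteq> 0} \<le> K"
    and finite_col: "\<And>c'. c' \<in> C \<Longrightarrow> finite {c\<in>C. a c c' \<noteq> 0}"
    and card_col_le: "\<And>c'. c' \<in> C \<Longrightarrow> card {c\<in>C. a c c' \<noteq> 0} \<le> K"
    and norm_entry_le: "\<And>c c'. c \<in> C \<Longrightarrow> cmod (a c c') \<le> 1"
begin

definition "row_supp c = {c'. a c c' \<noteq> 0}"
definition "col_supp c' = {c\<in>C. a c c' \<noteq> 0}"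

definition "mat_op x = (\<lambda>c'. if c' \<in> C then infsum (\<lambda>c. x c * a c c') C else 0)"
definition "adj_op y = (\<lambda>c. if c \<in> C then (\<Sum>c'\<in>row_supp c. y c' * cnj (a c c')) else 0)"

definition "row_ip c1 c2 = infsum (\<lambda>c'. cnj (a c1 c') * a c2 c') C"

definition "orthonormal_rows \<longleftrightarrow> (\<forall>c1\<in>C. \<forall>c2\<in>C. row_ip c1 c2 = (if c1 = c2 then 1 else 0))"
definition "normalized_cols \<longleftrightarrow> (\<forall>c'\<in>C. infsum (\<lambda>c. (cmod (a c c'))\<^sup>2) C = 1)"

lemma row_supp_subset: "c \<in> C \<Longrightarrow> row_supp c \<subseteq> C"
  using row_in_carrier by (auto simp: row_supp_def)

lemma finite_row_supp: "c \<in> C \<Longrightarrow> finite (row_supp c)"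
  using finite_row by (simp add: row_supp_def)

lemma finite_col_supp: "c' \<in> C \<Longrightarrow> finite (col_supp c')"
  using finite_col by (simp add: col_supp_def)

lemma col_supp_fibre: "i \<in> C \<Longrightarrow> {j\<in>C. i \<in> col_supp j} = row_supp i"
  using row_in_carrier by (auto simp: row_supp_def col_supp_def)

lemma row_supp_fibre: "j \<in> C \<Longrightarrow> {i\<in>C. j \<in> row_supp i} = col_supp j"
  by (auto simp: row_supp_def col_supp_def)

lemma row_ip_cnj: "row_ip c1 c2 = cnj (row_ip c2 c1)"
  unfolding row_ip_def infsum_cnj[symmetric] by (simp add: mult.commute)

lemma mat_op_eq_sum: "c' \<in> C \<Longrightarrow> mat_op x c' = (\<Sum>c\<in>col_supp c'. x c * a c c')"
  unfolding mat_op_def using finite_col_supp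
  by (auto intro!: infsum_finite_support simp: col_supp_def)

lemma mat_op_in_l2:
  assumes "x \<in> l2 C" shows "mat_op x \<in> l2 C"
proof -
  have "mat_op x = (\<lambda>j. if j \<in> C then (\<Sum>i\<in>col_supp j. x i * a i j) else 0)"
    using mat_op_eq_sum by (auto simp: mat_op_def)
  also have "\<dots> \<in> l2 C"
  proof (rule sparse_transform_in_l2[where K=K, OF _ finite_col_supp _ _ _ _ assms])
    show "col_supp j \<subseteq> C" for j by (auto simp: col_supp_def)
    show "card (col_supp j) \<le> K" if "j \<in> C" for j
      using card_col_le[OF that] by (simp add: col_supp_def)
    show "finite {j\<in>C. i \<in> col_supp j}" "card {j\<in>C. i \<in> col_supp j} \<le> K" if "i \<in> C" for i
      using col_supp_fibre[OF that] finite_row_supp[OF that] card_row_le[OF that]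
      by (simp_all add: row_supp_def)
  qed (use norm_entry_le in auto)
  finally show ?thesis .
qed

lemma adj_op_in_l2:
  assumes "y \<in> l2 C" shows "adj_op y \<in> l2 C"
  unfolding adj_op_def
proof (rule sparse_transform_in_l2[where K=K, OF row_supp_subset finite_row_supp _ _ _ _ assms])
  show "card (row_supp j) \<le> K" if "j \<in> C" for j
    using card_row_le[OF that] by (simp add: row_supp_def)
  show "finite {j\<in>C. i \<in> row_supp j}" "card {j\<in>C. i \<in> row_supp j} \<le> K" if "i \<in> C" for i
    using row_supp_fibre[OF that] finite_col_supp[OF that] card_col_le[OF that]
    by (simp_all add: col_supp_def)
qed (use norm_entry_le in auto)

lemma swap_Sigma_col_supp: "prod.swap ` Sigma C col_supp = Sigma C row_supp"
  using row_in_carrier by (auto simp: col_supp_def row_supp_def image_iff)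

lemma summable_on_adjoint_kernel:
  assumes x: "x \<in> l2 C" and y: "y \<in> l2 C"
  shows "(\<lambda>(i, j). cnj (x i) * cnj (a i j) * y j) summable_on Sigma C row_supp"
proof (rule abs_summable_summable, rule Infinite_Sum.abs_summable_on_comparison_test)
  have "(\<lambda>p. (cmod (x (fst p)))\<^sup>2) summable_on Sigma C row_supp"
    by (rule l2_summable_on_Sigma[where K=K]) (use finite_row card_row_le x in \<open>auto simp: row_supp_def\<close>)
  moreover have "(\<lambda>p. (cmod (y (fst p)))\<^sup>2) summable_on Sigma C col_supp"
    by (rule l2_summable_on_Sigma[where K=K]) (use finite_col card_col_le y in \<open>auto simp: col_supp_def\<close>)
  then have "(\<lambda>p. (cmod (y (snd p)))\<^sup>2) summable_on Sigma C row_supp"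
    unfolding swap_Sigma_col_supp[symmetric] by (subst summable_on_reindex) (auto simp: o_def)
  ultimately have "(\<lambda>p. (cmod (x (fst p)))\<^sup>2 + (cmod (y (snd p)))\<^sup>2) summable_on Sigma C row_supp"
    by (rule summable_on_add)
  then show "(\<lambda>p. norm ((cmod (x (fst p)))\<^sup>2 + (cmod (y (snd p)))\<^sup>2)) summable_on Sigma C row_supp"
    by (rule summable_on_iff_abs_summable_on_real[THEN iffD1])
next
  fix p assume "p \<in> Sigma C row_supp"
  then obtain i j where p: "p = (i, j)" "i \<in> C" by auto
  have "cmod (x i) * cmod (a i j) * cmod (y j) \<le> cmod (x i) * 1 * cmod (y j)"
    using norm_entry_le[OF p(2)] by (intro mult_right_mono mult_left_mono) auto
  also have "\<dots> \<le> (cmod (x i))\<^sup>2 + (cmod (y j))\<^sup>2"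
    using sum_squares_bound[of "cmod (x i)" "cmod (y j)"]
      mult_nonneg_nonneg[OF norm_ge_zero[of "x i"] norm_ge_zero[of "y j"]] by linarith
  finally show "norm ((\<lambda>(i, j). cnj (x i) * cnj (a i j) * y j) p)
      \<le> norm ((cmod (x (fst p)))\<^sup>2 + (cmod (y (snd p)))\<^sup>2)"
    by (simp add: p norm_mult)
qed

lemma ip_mat_op_adj_op:
  assumes x: "x \<in> l2 C" and y: "y \<in> l2 C"
  shows "ip C (mat_op x) y = ip C x (adj_op y)"
proof -
  define g where "g = (\<lambda>(i, j). cnj (x i) * cnj (a i j) * y j)"
  have g_summable: "g summable_on Sigma C row_supp"
    unfolding g_def by (rule summable_on_adjoint_kernel[OF x y])
  have "(g \<circ> prod.swap) summable_on Sigma C col_supp"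
    using g_summable unfolding swap_Sigma_col_supp[symmetric]
    by (subst (asm) summable_on_reindex) auto
  moreover have "g \<circ> prod.swap = (\<lambda>(j, i). g (i, j))" by auto
  ultimately have swapped_summable: "(\<lambda>(j, i). g (i, j)) summable_on Sigma C col_supp"
    by simp
  have "ip C (mat_op x) y = infsum (\<lambda>j. infsum (\<lambda>i. g (i, j)) (col_supp j)) C"
    unfolding ip_def
  proof (rule infsum_cong)
    fix j assume j: "j \<in> C"
    have "cnj (mat_op x j) * y j = (\<Sum>i\<in>col_supp j. g (i, j))"
      by (simp add: mat_op_eq_sum[OF j] g_def sum_distrib_right)
    then show "cnj (mat_op x j) * y j = infsum (\<lambda>i. g (i, j)) (col_supp j)"
      using finite_col_supp[OF j] by simp
  qed
  also have "\<dots> = infsum (\<lambda>(j, i). g (i, j)) (Sigma C col_supp)"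
    using infsum_Sigma'_banach[of "\<lambda>j i. g (i, j)" C col_supp] swapped_summable by simp
  also have "\<dots> = infsum g (Sigma C row_supp)"
    unfolding swap_Sigma_col_supp[symmetric]
    by (subst infsum_reindex) (auto simp: o_def case_prod_unfold intro!: infsum_cong)
  also have "\<dots> = infsum (\<lambda>i. infsum (\<lambda>j. g (i, j)) (row_supp i)) C"
    using infsum_Sigma'_banach[of "\<lambda>i j. g (i, j)" C row_supp] g_summable by simp
  also have "\<dots> = ip C x (adj_op y)"
    unfolding ip_def
  proof (rule infsum_cong)
    fix i assume i: "i \<in> C"
    have "cnj (x i) * adj_op y i = (\<Sum>j\<in>row_supp i. g (i, j))"
      by (simp add: adj_op_def i g_def sum_distrib_left mult_ac)
    then show "infsum (\<lambda>j. g (i, j)) (row_supp i) = cnj (x i) * adj_op y i"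
      using finite_row_supp[OF i] by simp
  qed
  finally show ?thesis .
qed

definition "unit_vec c = (\<lambda>z. if z = c then (1::complex) else 0)"

lemma unit_vec_in_l2: "c \<in> C \<Longrightarrow> unit_vec c \<in> l2 C"
  unfolding l2_def unit_vec_def
  by (auto intro!: summable_on_finite_support[where S="{c}"] split: if_splits)

lemma ip_unit_vec_left: "c \<in> C \<Longrightarrow> ip C (unit_vec c) x = x c"
  unfolding ip_def unit_vec_def by (subst infsum_finite_support[where S="{c}"]) auto

lemma ip_unit_vec_right: "c \<in> C \<Longrightarrow> ip C x (unit_vec c) = cnj (x c)"
  unfolding ip_def unit_vec_def by (subst infsum_finite_support[where S="{c}"]) auto

lemma mat_op_unit_vec:
  assumes c: "c \<in> C" shows "mat_op (unit_vec c) = a c"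
proof
  fix c'
  show "mat_op (unit_vec c) c' = a c c'"
  proof (cases "c' \<in> C")
    case True
    then show ?thesis
      using c unfolding mat_op_def unit_vec_def
      by (simp, subst infsum_finite_support[where S="{c}"]) auto
  next
    case False
    then show ?thesis using row_in_carrier[OF c, of c'] by (auto simp: mat_op_def)
  qed
qed

lemma unitary_imp_orthonormal_rows:
  assumes "unitary_on (l2 C) (ip C) mat_op"
  shows orthonormal_rows
  unfolding orthonormal_rows_def
proof (intro ballI)
  from assms obtain V where
    V: "\<And>x y. x \<in> l2 C \<Longrightarrow> y \<in> l2 C \<Longrightarrow> ip C (mat_op x) y = ip C x (V y)"
      "\<And>x. x \<in> l2 C \<Longrightarrow> V (mat_op x) = x"
    unfolding unitary_on_def by blast
  fix c1 c2 assume c: "c1 \<in> C" "c2 \<in> C"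
  have "row_ip c1 c2 = ip C (mat_op (unit_vec c1)) (mat_op (unit_vec c2))"
    using c by (simp add: mat_op_unit_vec ip_def row_ip_def)
  also have "\<dots> = ip C (unit_vec c1) (unit_vec c2)"
    using V c unit_vec_in_l2 mat_op_in_l2 by simp
  also have "\<dots> = (if c1 = c2 then 1 else 0)"
    using ip_unit_vec_left[OF c(1)] by (simp add: unit_vec_def)
  finally show "row_ip c1 c2 = (if c1 = c2 then 1 else 0)" .
qed

text \<open>The adjoint maps the basis vector \<open>c'\<close> to the conjugated column \<open>c'\<close>, and
  \<open>\<parallel>V e\<^sub>c\<^sub>'\<parallel>\<^sup>2 = \<langle>U V e\<^sub>c\<^sub>', e\<^sub>c\<^sub>'\<rangle> = 1\<close>.\<close>

lemma unitary_imp_normalized_cols: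
  assumes "unitary_on (l2 C) (ip C) mat_op"
  shows normalized_cols
  unfolding normalized_cols_def
proof
  from assms obtain V where
    V: "\<And>y. y \<in> l2 C \<Longrightarrow> V y \<in> l2 C"
      "\<And>x y. x \<in> l2 C \<Longrightarrow> y \<in> l2 C \<Longrightarrow> ip C (mat_op x) y = ip C x (V y)"
      "\<And>x. x \<in> l2 C \<Longrightarrow> mat_op (V x) = x"
    unfolding unitary_on_def by blast
  fix c' assume c': "c' \<in> C"
  define z where "z = V (unit_vec c')"
  have z: "z \<in> l2 C" using V(1) unit_vec_in_l2 c' by (simp add: z_def)
  have z_eq: "z c = cnj (a c c')" if c: "c \<in> C" for c
  proof -
    have "z c = ip C (mat_op (unit_vec c)) (unit_vec c')"
      using c c' V(2) unit_vec_in_l2 by (simp add: ip_unit_vec_left z_def)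
    then show ?thesis using c c' by (simp add: mat_op_unit_vec ip_unit_vec_right)
  qed
  have "ip C z z = ip C (mat_op z) (unit_vec c')"
    using V(2) z c' unit_vec_in_l2 by (simp add: z_def)
  also have "\<dots> = ip C (unit_vec c') (unit_vec c')"
    using V(3) c' unit_vec_in_l2 by (simp add: z_def)
  also have "\<dots> = 1" using ip_unit_vec_left[OF c'] by (simp add: unit_vec_def)
  finally have "ip C z z = 1" .
  moreover have "ip C z z = of_real (\<Sum>c\<in>col_supp c'. (cmod (a c c'))\<^sup>2)"
  proof -
    have "ip C z z = (\<Sum>c\<in>col_supp c'. cnj (z c) * z c)"
      unfolding ip_def using finite_col_supp[OF c'] z_eq
      by (intro infsum_finite_support) (auto simp: col_supp_def)
    also have "\<dots> = (\<Sum>c\<in>col_supp c'. of_real ((cmod (a c c'))\<^sup>2))"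
      unfolding cnj_mult_self using z_eq by (intro sum.cong) (auto simp: col_supp_def)
    finally show ?thesis by simp
  qed
  moreover have "infsum (\<lambda>c. (cmod (a c c'))\<^sup>2) C = (\<Sum>c\<in>col_supp c'. (cmod (a c c'))\<^sup>2)"
    using finite_col_supp[OF c'] by (intro infsum_finite_support) (auto simp: col_supp_def)
  ultimately show "infsum (\<lambda>c. (cmod (a c c'))\<^sup>2) C = 1"
    by (metis of_real_eq_1_iff)
qed

lemma row_ip_eq_sum:
  assumes "c1 \<in> C" "finite J" "row_supp c1 \<subseteq> J" "J \<subseteq> C"
  shows "row_ip c1 c2 = (\<Sum>j\<in>J. cnj (a c1 j) * a c2 j)"
  unfolding row_ip_def using assms by (intro infsum_finite_support) (auto simp: row_supp_def)

lemma row_supp_nonempty: "orthonormal_rows \<Longrightarrow> c \<in> C \<Longrightarrow> row_supp c \<noteq> {}"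
  using row_ip_eq_sum[of c "{}" c] by (auto simp: orthonormal_rows_def)

lemma col_supp_nonempty: "normalized_cols \<Longrightarrow> c' \<in> C \<Longrightarrow> col_supp c' \<noteq> {}"
  using infsum_finite_support[of "{}" C "\<lambda>c. (cmod (a c c'))\<^sup>2"]
  by (auto simp: normalized_cols_def col_supp_def)

lemma norm_sq_mat_op_finite:
  assumes orth: orthonormal_rows and I: "finite I" "I \<subseteq> C"
    and J: "finite J" "J \<subseteq> C" "\<And>i. i \<in> I \<Longrightarrow> row_supp i \<subseteq> J"
  shows "(\<Sum>j\<in>J. (cmod (\<Sum>i\<in>I. z i * a i j))\<^sup>2) = (\<Sum>i\<in>I. (cmod (z i))\<^sup>2)"
proof -
  have "(\<Sum>j\<in>J. cnj (\<Sum>i\<in>I. z i * a i j) * (\<Sum>k\<in>I. z k * a k j))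
      = (\<Sum>j\<in>J. \<Sum>i\<in>I. \<Sum>k\<in>I. cnj (z i) * z k * (cnj (a i j) * a k j))"
    by (simp only: cnj_sum sum_product complex_cnj_mult) (simp add: mult_ac)
  also have "\<dots> = (\<Sum>i\<in>I. \<Sum>k\<in>I. \<Sum>j\<in>J. cnj (z i) * z k * (cnj (a i j) * a k j))"
    by (subst sum.swap) (intro sum.cong refl sum.swap)
  also have "\<dots> = (\<Sum>i\<in>I. \<Sum>k\<in>I. cnj (z i) * z k * row_ip i k)"
    using I J by (intro sum.cong refl) (auto simp: row_ip_eq_sum sum_distrib_left)
  also have "\<dots> = (\<Sum>i\<in>I. \<Sum>k\<in>I. cnj (z i) * z k * (if i = k then 1 else 0))"
    using orth I by (intro sum.cong refl) (simp add: orthonormal_rows_def subset_iff)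
  also have "\<dots> = (\<Sum>i\<in>I. cnj (z i) * z i)"
    using I by (simp add: if_distrib cong: if_cong)
  finally have "of_real (\<Sum>j\<in>J. (cmod (\<Sum>i\<in>I. z i * a i j))\<^sup>2) = (of_real (\<Sum>i\<in>I. (cmod (z i))\<^sup>2) :: complex)"
    by (simp only: cnj_mult_self of_real_sum)
  then show ?thesis using of_real_eq_iff by blast
qed

text \<open>Column orthogonality is not among the hypotheses: the isometry \<open>U\<close> maps the conjugated
  column \<open>l\<close>, a unit vector, to a unit vector whose \<open>l\<close>-th entry is already 1.\<close>

lemma orthonormal_cols_on_col_supp:
  assumes orth: orthonormal_rows and norm: normalized_cols and l: "l \<in> C"
  shows "(\<Sum>i\<in>col_supp l. cnj (a i l) * a i j) = (if j = l then 1 else 0)"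
proof -
  define I where "I = col_supp l"
  define u where "u j = (\<Sum>i\<in>I. cnj (a i l) * a i j)" for j
  define J where "J = \<Union>(row_supp ` I)"
  have I: "finite I" "I \<subseteq> C" using finite_col_supp[OF l] by (auto simp: I_def col_supp_def)
  have J: "finite J" "J \<subseteq> C" using I finite_row_supp row_supp_subset by (auto simp: J_def)
  have "l \<in> J" using col_supp_nonempty[OF norm l] by (auto simp: J_def I_def row_supp_def col_supp_def)
  have col_norm: "(\<Sum>i\<in>I. (cmod (a i l))\<^sup>2) = 1"
    using norm l infsum_finite_support[of I C "\<lambda>i. (cmod (a i l))\<^sup>2"] I
    by (auto simp: normalized_cols_def I_def col_supp_def)
  have "u l = of_real (\<Sum>i\<in>I. (cmod (a i l))\<^sup>2)"
    by (simp only: u_def cnj_mult_self of_real_sum)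
  then have u_l: "u l = 1" by (simp add: col_norm)
  have "(\<Sum>j\<in>J. (cmod (u j))\<^sup>2) = 1"
    using norm_sq_mat_op_finite[OF orth I J, of "\<lambda>i. cnj (a i l)"] col_norm
    by (auto simp: u_def J_def)
  then have "(\<Sum>j\<in>J - {l}. (cmod (u j))\<^sup>2) = 0"
    using J \<open>l \<in> J\<close> u_l by (simp add: sum.remove)
  then have "u j = 0" if "j \<in> J - {l}" for j
    using J that by (subst (asm) sum_nonneg_eq_0_iff) auto
  moreover have "u j = 0" if "j \<notin> J" for j
    using that by (auto simp: u_def J_def row_supp_def intro!: sum.neutral)
  ultimately have "u j = (if j = l then 1 else 0)" using u_l by auto
  then show ?thesis by (simp add: u_def I_def)
qed

lemma orthonormal_cols:
  assumes orth: orthonormal_rows and norm: normalized_cols and l: "l \<in> C"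
    and I: "finite I" "I \<subseteq> C" "col_supp j \<subseteq> I"
  shows "(\<Sum>i\<in>I. cnj (a i l) * a i j) = (if j = l then 1 else 0)"
proof -
  have "(\<Sum>i\<in>I. cnj (a i l) * a i j) = (\<Sum>i\<in>I \<union> col_supp l. cnj (a i l) * a i j)"
    using I finite_col_supp[OF l] by (intro sum.mono_neutral_left) (auto simp: col_supp_def)
  also have "\<dots> = (\<Sum>i\<in>col_supp l. cnj (a i l) * a i j)"
    using I finite_col_supp[OF l] by (intro sum.mono_neutral_right) (auto simp: col_supp_def)
  finally show ?thesis using orthonormal_cols_on_col_supp[OF orth norm l] by simp
qed

lemma adj_op_mat_op:
  assumes orth: orthonormal_rows and x: "x \<in> l2 C"
  shows "adj_op (mat_op x) = x"
proof
  fix i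
  show "adj_op (mat_op x) i = x i"
  proof (cases "i \<in> C")
    case False
    then show ?thesis using x by (simp add: adj_op_def l2_def)
  next
    case i: True
    define G where "G = \<Union>(col_supp ` row_supp i)"
    have G: "finite G" "G \<subseteq> C"
      using finite_row_supp[OF i] row_supp_subset[OF i] finite_col_supp
      by (auto simp: G_def col_supp_def)
    have "i \<in> G"
      using row_supp_nonempty[OF orth i] i by (auto simp: G_def row_supp_def col_supp_def)
    have "adj_op (mat_op x) i = (\<Sum>j\<in>row_supp i. (\<Sum>k\<in>G. x k * a k j) * cnj (a i j))"
    proof -
      have "(\<Sum>k\<in>col_supp j. x k * a k j) = (\<Sum>k\<in>G. x k * a k j)" if "j \<in> row_supp i" for j
        using that G by (intro sum.mono_neutral_left) (auto simp: G_def col_supp_def)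
      then show ?thesis
        using i row_supp_subset[OF i] by (auto simp: adj_op_def mat_op_eq_sum intro!: sum.cong)
    qed
    also have "\<dots> = (\<Sum>k\<in>G. x k * (\<Sum>j\<in>row_supp i. cnj (a i j) * a k j))"
      by (simp add: sum_distrib_left sum_distrib_right mult_ac sum.swap[of _ G])
    also have "\<dots> = (\<Sum>k\<in>G. x k * (if i = k then 1 else 0))"
      using orth G i finite_row_supp[OF i] row_supp_subset[OF i]
      by (intro sum.cong refl) (auto simp: orthonormal_rows_def row_ip_eq_sum[symmetric])
    also have "\<dots> = x i" using G \<open>i \<in> G\<close> by (simp add: if_distrib cong: if_cong)
    finally show ?thesis .
  qed
qed

lemma mat_op_adj_op:
  assumes orth: orthonormal_rows and norm: normalized_cols and y: "y \<in> l2 C"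
  shows "mat_op (adj_op y) = y"
proof
  fix j
  show "mat_op (adj_op y) j = y j"
  proof (cases "j \<in> C")
    case False
    then show ?thesis using y by (simp add: mat_op_def l2_def)
  next
    case j: True
    define G where "G = \<Union>(row_supp ` col_supp j)"
    have G: "finite G" "G \<subseteq> C"
      using finite_col_supp[OF j] finite_row_supp row_supp_subset by (auto simp: G_def col_supp_def)
    have "j \<in> G"
      using col_supp_nonempty[OF norm j] by (auto simp: G_def row_supp_def col_supp_def)
    have "mat_op (adj_op y) j = (\<Sum>i\<in>col_supp j. (\<Sum>l\<in>G. y l * cnj (a i l)) * a i j)"
    proof -
      have "(\<Sum>l\<in>row_supp i. y l * cnj (a i l)) = (\<Sum>l\<in>G. y l * cnj (a i l))" if "i \<in> col_supp j" for i
        using that G by (intro sum.mono_neutral_left) (auto simp: G_def row_supp_def)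
      then show ?thesis
        using j by (auto simp: adj_op_def mat_op_eq_sum col_supp_def intro!: sum.cong)
    qed
    also have "\<dots> = (\<Sum>l\<in>G. y l * (\<Sum>i\<in>col_supp j. cnj (a i l) * a i j))"
      by (simp add: sum_distrib_left sum_distrib_right mult_ac sum.swap[of _ G])
    also have "\<dots> = (\<Sum>l\<in>G. y l * (if j = l then 1 else 0))"
      using orthonormal_cols[OF orth norm _ finite_col_supp[OF j]] G j
      by (intro sum.cong refl) (auto simp: col_supp_def)
    also have "\<dots> = y j" using G \<open>j \<in> G\<close> by (simp add: if_distrib cong: if_cong)
    finally show ?thesis .
  qed
qed

theorem unitary_on_iff: "unitary_on (l2 C) (ip C) mat_op \<longleftrightarrow> orthonormal_rows \<and> normalized_cols"
proof
  assume "unitary_on (l2 C) (ip C) mat_op"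
  then show "orthonormal_rows \<and> normalized_cols"
    using unitary_imp_orthonormal_rows unitary_imp_normalized_cols by blast
next
  assume "orthonormal_rows \<and> normalized_cols"
  then show "unitary_on (l2 C) (ip C) mat_op"
    unfolding unitary_on_def
    using mat_op_in_l2 adj_op_in_l2 ip_mat_op_adj_op adj_op_mat_op mat_op_adj_op by blast
qed

end

section \<open>Head movement and stacks\<close>

definition move_back :: "'a list \<Rightarrow> nat \<Rightarrow> dir \<Rightarrow> nat" where
  "move_back w p d = (case d of Stay \<Rightarrow> p | Right \<Rightarrow> (p + length w + 1) mod (length w + 2))"

lemma move_lt: "p < length w + 2 \<Longrightarrow> move w p d < length w + 2"
  by (cases d) (auto simp: move_def)

lemma move_back_lt: "p < length w + 2 \<Longrightarrow> move_back w p d < length w + 2"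
  by (cases d) (auto simp: move_back_def)

lemma move_back_move:
  assumes "p < length w + 2" shows "move_back w (move w p d) d = p"
proof (cases d)
  case Right
  show ?thesis
  proof (cases "Suc p < length w + 2")
    case True
    have "Suc p + length w + 1 = p + (length w + 2)" by simp
    moreover have "(p + (length w + 2)) mod (length w + 2) = p"
      using assms by (metis mod_add_self2 mod_less)
    ultimately show ?thesis
      using Right True by (simp only: move_def move_back_def dir.case mod_less)
  next
    case False
    then have "p = length w + 1" using assms by simp
    then show ?thesis using Right by (simp add: move_def move_back_def)
  qed
qed (simp add: move_def move_back_def)

lemma move_move_back:
  assumes "p < length w + 2" shows "move w (move_back w p d) d = p"
proof (cases d)
  case Right
  show ?thesis
  proof (cases p)
    case (Suc p')
    have "p + length w + 1 = p' + (length w + 2)" using Suc by simp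
    moreover have "p' < length w + 2" using assms Suc by simp
    then have "(p' + (length w + 2)) mod (length w + 2) = p'"
      by (metis mod_add_self2 mod_less)
    ultimately have "(p + length w + 1) mod (length w + 2) = p'" by simp
    then show ?thesis using Right Suc assms by (simp add: move_def move_back_def)
  qed (simp add: Right move_def move_back_def)
qed (simp add: move_def move_back_def)

lemma tape_nth_in_gamma_set: "w \<in> lists Sig \<Longrightarrow> p < length w + 2 \<Longrightarrow> tape w ! p \<in> gamma_set Sig"
  by (rule subsetD[OF _ nth_mem]) (auto simp: tape_def gamma_set_def)

lemma ex_tape_position:
  assumes "\<sigma> \<in> gamma_set Sig"
  obtains w p where "w \<in> lists Sig" "p < length w + 2" "tape w ! p = \<sigma>"
proof -
  consider "\<sigma> = LEnd" | "\<sigma> = REnd" | x where "\<sigma> = Inp x" "x \<in> Sig"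
    using assms by (auto simp: gamma_set_def)
  then show ?thesis
  proof cases
    case 1 then show ?thesis using that[of "[]" 0] by (simp add: tape_def)
  next
    case 2 then show ?thesis using that[of "[]" 1] by (simp add: tape_def)
  next
    case 3 then show ?thesis using that[of "[x]" 1] by (simp add: tape_def)
  qed
qed

lemma Some_in_delta_set: "\<tau> \<in> delta_set T \<Longrightarrow> \<tau> \<noteq> None \<Longrightarrow> \<tau> \<in> Some ` T"
  by (auto simp: delta_set_def)

lemma Z0T_star_in_lists: "s \<in> Z0T_star T \<Longrightarrow> s \<in> lists (delta_set T)"
  by (cases s) (auto simp: Z0T_star_def delta_set_def)

lemma Z0T_star_last: "s \<in> Z0T_star T \<Longrightarrow> last s \<in> delta_set T"
  using Z0T_star_in_lists by (fastforce simp: Z0T_star_def)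

lemma Z0T_star_short: "s \<in> Z0T_star T \<Longrightarrow> length s < 2 \<Longrightarrow> s = [None]"
  by (cases s) (auto simp: Z0T_star_def)

lemma Z0T_star_last_Some: "s \<in> Z0T_star T \<Longrightarrow> 2 \<le> length s \<Longrightarrow> last s \<in> Some ` T"
  by (cases s) (auto simp: Z0T_star_def)

lemma Z0T_star_last_None: "s \<in> Z0T_star T \<Longrightarrow> last s = None \<Longrightarrow> s = [None]"
  using Z0T_star_short Z0T_star_last_Some by fastforce

lemma Z0T_star_snoc: "s \<in> Z0T_star T \<Longrightarrow> \<tau> \<in> Some ` T \<Longrightarrow> s @ [\<tau>] \<in> Z0T_star T"
  by (cases s) (auto simp: Z0T_star_def)

lemma Z0T_star_butlast: "s \<in> Z0T_star T \<Longrightarrow> 2 \<le> length s \<Longrightarrow> butlast s \<in> Z0T_star T"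
  by (cases s) (auto simp: Z0T_star_def dest: in_set_butlastD)

definition legal_push :: "'t set \<Rightarrow> 't option \<Rightarrow> 't option list \<Rightarrow> bool" where
  "legal_push T \<tau> \<omega> \<longleftrightarrow> length \<omega> \<le> 2 \<and> (length \<omega> = 2 \<longrightarrow> \<omega> ! 0 = \<tau>) \<and>
     (\<tau> = None \<longrightarrow> \<omega> \<in> Z0T_star T) \<and> (\<tau> \<noteq> None \<longrightarrow> \<omega> \<in> lists (Some ` T))"

lemma legal_push_Nil: "legal_push T \<tau> [] \<longleftrightarrow> \<tau> \<noteq> None"
  by (simp add: legal_push_def Z0T_star_def)

lemma legal_push_single:
  "legal_push T \<tau> [x] \<longleftrightarrow> (\<tau> = None \<longrightarrow> x = None) \<and> (\<tau> \<noteq> None \<longrightarrow> x \<in> Some ` T)"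
  by (simp add: legal_push_def Z0T_star_def)

lemma legal_push_pair:
  "legal_push T \<tau> [x, y] \<longleftrightarrow> x = \<tau> \<and> y \<in> Some ` T \<and> (\<tau> \<noteq> None \<longrightarrow> x \<in> Some ` T)"
  by (auto simp: legal_push_def Z0T_star_def)

lemma legal_push_Z0T_star:
  assumes "s \<in> Z0T_star T" "legal_push T (last s) \<omega>"
  shows "butlast s @ \<omega> \<in> Z0T_star T"
proof (cases "last s = None")
  case True
  then show ?thesis using assms Z0T_star_last_None by (fastforce simp: legal_push_def)
next
  case False
  then have "\<omega> \<in> lists (Some ` T)" "2 \<le> length s"
    using assms Z0T_star_short by (fastforce simp: legal_push_def)+
  then show ?thesis
    using assms(1) by (cases s) (auto simp: Z0T_star_def butlast_append dest: in_set_butlastD)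
qed

lemma legal_push_bottom: "legal_push T \<tau>1 \<omega> \<Longrightarrow> legal_push T \<tau>2 \<omega> \<Longrightarrow> (\<tau>1 = None) = (\<tau>2 = None)"
  by (cases \<omega>) (auto simp: legal_push_def Z0T_star_def)

lemma append_eq_append_longer_cases:
  assumes "b1 @ \<omega>1 = b2 @ \<omega>2" "length \<omega>2 \<le> 2" "length b2 < length b1"
  shows "(\<exists>t. b1 = b2 @ [t]) \<or> (\<exists>t u. b1 = b2 @ [t, u])"
proof -
  obtain us where us: "b1 = b2 @ us" "us @ \<omega>1 = \<omega>2"
    using assms(1,3) by (auto simp: append_eq_append_conv2)
  then have "us \<noteq> []" "length us \<le> 2" using assms(2,3) by auto
  then show ?thesis using us(1) by (auto simp: length_Suc_conv numeral_2_eq_2 le_Suc_eq)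
qed

definition min_stack :: "'t option \<Rightarrow> 't option list" where
  "min_stack \<tau> = (if \<tau> = None then [None] else [None, \<tau>])"

lemma min_stack_props:
  assumes "\<tau> \<in> delta_set T"
  shows "min_stack \<tau> \<in> Z0T_star T" "last (min_stack \<tau>) = \<tau>"
    "butlast (min_stack \<tau>) = (if \<tau> = None then [] else [None])"
  using Some_in_delta_set[OF assms] by (auto simp: min_stack_def Z0T_star_def)

text \<open>\<open>\<tau>\<^sub>2\<close> is the head of \<open>s\<close> and \<open>\<tau>\<^sub>1\<close> the symbol below it; for \<open>s = [None]\<close>, \<open>\<tau>\<^sub>1\<close> is arbitrary.\<close>

definition stack_tops :: "'t option list \<Rightarrow> 't option \<Rightarrow> 't option \<Rightarrow> bool" where
  "stack_tops s \<tau>1 \<tau>2 \<longleftrightarrow> (s = [None] \<and> \<tau>2 = None) \<or> (2 \<le> length s \<and> last s = \<tau>2 \<and> last (butlast s) = \<tau>1)"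

lemma butlast_butlast_append:
  "2 \<le> length s \<Longrightarrow> s = butlast (butlast s) @ [last (butlast s), last s]"
  by (induction s rule: rev_induct) (auto simp: le_Suc_eq intro: append_butlast_last_id[symmetric])

lemma suffix_in_candidates:
  assumes "s = b @ \<omega>" "length \<omega> \<le> 2" "stack_tops s \<tau>1 \<tau>2"
  shows "\<omega> \<in> {[], [\<tau>2], [\<tau>1, \<tau>2]}"
proof -
  consider "\<omega> = []" | x where "\<omega> = [x]" | x y where "\<omega> = [x, y]"
    using assms(2) by (cases \<omega> rule: rev_cases) (auto simp: le_Suc_eq length_Suc_conv numeral_2_eq_2)
  then show ?thesis
    using assms(1,3) by cases (auto simp: stack_tops_def butlast_append)
qed

lemma pushed_suffix:
  assumes s: "s \<in> Z0T_star T" and tops: "stack_tops s \<tau>1 \<tau>2" and legal: "legal_push T \<tau> \<omega>"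
    and \<tau>: "\<tau> \<in> delta_set T" and \<omega>: "\<omega> \<in> {[], [\<tau>2], [\<tau>1, \<tau>2]}"
  obtains b where "s = b @ \<omega>" "b @ [\<tau>] \<in> Z0T_star T"
proof -
  consider "\<omega> = []" | "\<omega> = [\<tau>2]" "s = [None]" "\<tau>2 = None" | "\<omega> = [\<tau>2]" "2 \<le> length s" "last s = \<tau>2"
    | "\<omega> = [\<tau>1, \<tau>2]" using \<omega> tops by (auto simp: stack_tops_def)
  then show ?thesis
  proof cases
    case 1
    then show ?thesis
      using that[of s] legal Z0T_star_snoc[OF s] Some_in_delta_set[OF \<tau>] by (simp add: legal_push_Nil)
  next
    case 2
    then show ?thesis using that[of "[]"] legal by (auto simp: legal_push_single Z0T_star_def)
  next
    case 3
    then have "\<tau> \<in> Some ` T"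
      using legal Z0T_star_last_Some[OF s] Some_in_delta_set[OF \<tau>] by (auto simp: legal_push_single)
    moreover have "s = butlast s @ [\<tau>2]" using 3 by (cases s rule: rev_cases) auto
    ultimately show ?thesis
      using that[of "butlast s"] 3 Z0T_star_snoc[OF Z0T_star_butlast[OF s]] by simp
  next
    case 4
    then have "\<tau>1 = \<tau>" "\<tau>2 \<noteq> None" using legal by (auto simp: legal_push_pair)
    then have "2 \<le> length s" "s = butlast (butlast s) @ [\<tau>, \<tau>2]"
      using tops butlast_butlast_append[of s] by (auto simp: stack_tops_def)
    moreover have "butlast s = butlast (butlast s) @ [\<tau>]"
      using calculation(2) by (metis butlast_snoc append_assoc append_Cons append_Nil)
    ultimately show ?thesis
      using that[of "butlast (butlast s)"] 4 \<open>\<tau>1 = \<tau>\<close> Z0T_star_butlast[OF s] by simp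
  qed
qed

section \<open>The evolution operator of a simplified QPA-structure\<close>

locale simplified_qpa =
  fixes Q :: "'q set" and Sig :: "'a set" and T :: "'t set" and q0 :: 'q and Qa Qr :: "'q set"
    and \<delta> :: "('q, 'a, 't) trans" and D :: "'q \<Rightarrow> dir"
  assumes qpa: "qpa_structure Q Sig T q0 Qa Qr \<delta>"
    and simplified: "qpa_simplified Q Sig T \<delta> D"
begin

abbreviation "\<phi> \<equiv> reduced_trans \<delta> D"
abbreviation "Conf \<equiv> configs Q Sig T"
abbreviation "amp \<equiv> evol_amp Q T \<delta>"

definition "short_words = {\<omega> \<in> lists (delta_set T). length \<omega> \<le> 2}"
definition "targets = Q \<times> short_words"

definition step :: "('q, 'a, 't) config \<Rightarrow> 'q \<times> 't option list \<Rightarrow> ('q, 'a, 't) config" where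
  "step = (\<lambda>(w, p, q1, s) (q, \<omega>). (w, move w p (D q), q, butlast s @ \<omega>))"

definition step_amp :: "('q, 'a, 't) config \<Rightarrow> 'q \<times> 't option list \<Rightarrow> complex" where
  "step_amp = (\<lambda>(w, p, q1, s) (q, \<omega>). \<phi> q1 (tape w ! p) (last s) q \<omega>)"

lemma step_simp [simp]: "step (w, p, q1, s) (q, \<omega>) = (w, move w p (D q), q, butlast s @ \<omega>)"
  by (simp add: step_def)

lemma step_amp_simp [simp]: "step_amp (w, p, q1, s) (q, \<omega>) = \<phi> q1 (tape w ! p) (last s) q \<omega>"
  by (simp add: step_amp_def)

lemma step_inj: "step c k1 = step c k2 \<Longrightarrow> k1 = k2"
  by (cases c, cases k1, cases k2) auto

lemma finite_Q: "finite Q"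
  using qpa by (simp add: qpa_structure_def)

lemma finite_delta_set: "finite (delta_set T)"
  using qpa by (simp add: qpa_structure_def delta_set_def)

lemma finite_short_words: "finite short_words"
proof -
  have "short_words \<subseteq> {xs. set xs \<subseteq> delta_set T \<and> length xs \<le> 2}"
    by (auto simp: short_words_def)
  then show ?thesis
    using finite_lists_length_le[OF finite_delta_set, of 2] finite_subset by blast
qed

lemma finite_targets: "finite targets"
  using finite_Q finite_short_words by (simp add: targets_def)

lemma
  assumes "q1 \<in> Q" "\<sigma> \<in> gamma_set Sig" "\<tau> \<in> delta_set T" "q \<in> Q" "\<omega> \<in> lists (delta_set T)"
  shows norm_trans_le: "cmod (\<delta> q1 \<sigma> \<tau> q d \<omega>) \<le> 1"
    and legal_push_trans: "\<delta> q1 \<sigma> \<tau> q d \<omega> \<noteq> 0 \<Longrightarrow> legal_push T \<tau> \<omega>"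
    and trans_eq_0_if_dir_ne: "d \<noteq> D q \<Longrightarrow> \<delta> q1 \<sigma> \<tau> q d \<omega> = 0"
  using qpa simplified assms unfolding qpa_structure_def qpa_simplified_def legal_push_def by metis+

lemma
  assumes "q1 \<in> Q" "\<sigma> \<in> gamma_set Sig" "\<tau> \<in> delta_set T" "q \<in> Q" "\<omega> \<in> lists (delta_set T)"
  shows norm_reduced_trans_le: "cmod (\<phi> q1 \<sigma> \<tau> q \<omega>) \<le> 1"
    and legal_push_reduced_trans: "\<phi> q1 \<sigma> \<tau> q \<omega> \<noteq> 0 \<Longrightarrow> legal_push T \<tau> \<omega>"
    and reduced_trans_eq_0_if_long: "\<omega> \<notin> short_words \<Longrightarrow> \<phi> q1 \<sigma> \<tau> q \<omega> = 0"
  using norm_trans_le[OF assms] legal_push_trans[OF assms] assms(5)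
  by (auto simp: reduced_trans_def short_words_def legal_push_def)

lemma config_props:
  assumes "(w, p, q1, s) \<in> Conf"
  shows "w \<in> lists Sig" "p < length w + 2" "q1 \<in> Q" "s \<in> Z0T_star T"
    "tape w ! p \<in> gamma_set Sig" "last s \<in> delta_set T" "s = butlast s @ [last s]"
proof -
  show c: "w \<in> lists Sig" "p < length w + 2" "q1 \<in> Q" "s \<in> Z0T_star T"
    using assms by (auto simp: configs_def)
  show "tape w ! p \<in> gamma_set Sig" "last s \<in> delta_set T"
    using tape_nth_in_gamma_set[OF c(1,2)] Z0T_star_last[OF c(4)] by auto
  show "s = butlast s @ [last s]" using c(4) by (simp add: Z0T_star_def)
qed

text \<open>Only the direction \<open>D q\<close> and pushed words of length at most 2 contribute to the amplitude.\<close>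

lemma evol_amp_eq_sum:
  assumes c: "c \<in> Conf"
  shows "amp c c' = (\<Sum>k\<in>targets. if c' = step c k then step_amp c k else 0)"
proof -
  obtain w p q1 s where c_eq: "c = (w, p, q1, s)" by (cases c) auto
  note c_props = config_props[OF c[unfolded c_eq]]
  define h where "h = (\<lambda>(q::'q, \<omega>::'t option list). (q, D q, \<omega>))"
  define F where "F = (\<lambda>(q, d, \<omega>). if c' = (w, move w p d, q, butlast s @ \<omega>)
                          then \<delta> q1 (tape w ! p) (last s) q d \<omega> else 0)"
  have "amp c c' = infsum F (Q \<times> UNIV \<times> lists (delta_set T))"
    by (simp add: evol_amp_def c_eq F_def)
  also have "\<dots> = sum F (h ` targets)"
  proof (rule infsum_finite_support)
    show "finite (h ` targets)" using finite_targets by simp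
    show "h ` targets \<subseteq> Q \<times> UNIV \<times> lists (delta_set T)"
      by (auto simp: h_def targets_def short_words_def)
    fix x assume x: "x \<in> Q \<times> UNIV \<times> lists (delta_set T)" "x \<notin> h ` targets"
    then obtain q d \<omega> where x_eq: "x = (q, d, \<omega>)" "q \<in> Q" "\<omega> \<in> lists (delta_set T)" by auto
    show "F x = 0"
    proof (cases "d = D q")
      case True
      then have "\<omega> \<notin> short_words" using x x_eq by (auto simp: h_def targets_def image_iff)
      then show ?thesis
        using True c_props x_eq reduced_trans_eq_0_if_long
        by (simp add: F_def reduced_trans_def)
    next
      case False
      then show ?thesis using trans_eq_0_if_dir_ne c_props x_eq by (simp add: F_def)
    qed
  qed
  also have "\<dots> = (\<Sum>k\<in>targets. if c' = step c k then step_amp c k else 0)"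
    by (subst sum.reindex) (auto simp: inj_on_def h_def F_def c_eq reduced_trans_def intro!: sum.cong)
  finally show ?thesis .
qed

lemma evol_amp_step:
  assumes "c \<in> Conf" "k \<in> targets" shows "amp c (step c k) = step_amp c k"
proof -
  have "amp c (step c k) = (\<Sum>k'\<in>targets. if k' = k then step_amp c k' else 0)"
    unfolding evol_amp_eq_sum[OF assms(1)] by (intro sum.cong refl) (auto dest: step_inj)
  then show ?thesis using assms(2) finite_targets by simp
qed

lemma evol_amp_eq_0: "c \<in> Conf \<Longrightarrow> (\<And>k. k \<in> targets \<Longrightarrow> c' \<noteq> step c k) \<Longrightarrow> amp c c' = 0"
  by (simp add: evol_amp_eq_sum)

lemma evol_amp_nonzero_cases:
  assumes "c \<in> Conf" "amp c c' \<noteq> 0"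
  obtains k where "k \<in> targets" "c' = step c k" "amp c c' = step_amp c k"
  using evol_amp_step evol_amp_eq_0 assms by metis

lemma step_in_configs:
  assumes c: "c \<in> Conf" and k: "k \<in> targets" and nz: "step_amp c k \<noteq> 0"
  shows "step c k \<in> Conf"
proof -
  obtain w p q1 s where c_eq: "c = (w, p, q1, s)" by (cases c) auto
  obtain q \<omega> where k_eq: "k = (q, \<omega>)" by (cases k) auto
  note c_props = config_props[OF c[unfolded c_eq]]
  have q: "q \<in> Q" "\<omega> \<in> lists (delta_set T)"
    using k by (auto simp: k_eq targets_def short_words_def)
  have "legal_push T (last s) \<omega>"
    using legal_push_reduced_trans[OF c_props(3,5,6) q] nz by (simp add: c_eq k_eq)
  then show ?thesis
    using legal_push_Z0T_star[OF c_props(4)] c_props move_lt[OF c_props(2)] q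
    by (simp add: c_eq k_eq configs_def)
qed

definition "sparsity = card targets + card (Q \<times> {..2::nat} \<times> delta_set T)"

text \<open>A predecessor of \<open>(w, p', q', s')\<close> is determined by its state, the length of the word it
  pushes and its stack head.\<close>

definition pred_candidates :: "('q, 'a, 't) config \<Rightarrow> ('q, 'a, 't) config set" where
  "pred_candidates = (\<lambda>(w, p', q', s'). (\<lambda>(q1, m, \<tau>). (w, move_back w p' (D q'), q1, take (length s' - m) s' @ [\<tau>]))
     ` (Q \<times> {..2::nat} \<times> delta_set T))"

lemma finite_pred_candidates: "finite (pred_candidates c')"
  using finite_Q finite_delta_set by (auto simp: pred_candidates_def split: prod.splits)

lemma card_pred_candidates_le: "card (pred_candidates c') \<le> card (Q \<times> {..2::nat} \<times> delta_set T)"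
  unfolding pred_candidates_def
  by (cases c') (simp only: prod.case, rule card_image_le, use finite_Q finite_delta_set in simp)

lemma pred_candidates_complete:
  assumes c: "c \<in> Conf" and nz: "amp c c' \<noteq> 0"
  shows "c \<in> pred_candidates c'"
proof -
  obtain k where k: "k \<in> targets" "c' = step c k"
    using evol_amp_nonzero_cases[OF c nz] by blast
  obtain w p q1 s where c_eq: "c = (w, p, q1, s)" by (cases c) auto
  obtain q \<omega> where k_eq: "k = (q, \<omega>)" by (cases k) auto
  note c_props = config_props[OF c[unfolded c_eq]]
  have x: "(q1, length \<omega>, last s) \<in> Q \<times> {..2::nat} \<times> delta_set T"
    using c_props k by (auto simp: k_eq targets_def short_words_def)
  have c_eq': "(w, p, q1, s) = (w, move_back w (move w p (D q)) (D q), q1,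
      take (length (butlast s @ \<omega>) - length \<omega>) (butlast s @ \<omega>) @ [last s])"
    using c_props by (simp add: move_back_move)
  show ?thesis
    unfolding pred_candidates_def k(2) c_eq k_eq step_simp prod.case
    by (rule rev_image_eqI[OF x]) (use c_eq' in simp)
qed

lemma norm_evol_amp_le:
  assumes c: "c \<in> Conf" shows "cmod (amp c c') \<le> 1"
proof (cases "amp c c' = 0")
  case False
  then obtain k where k: "k \<in> targets" "amp c c' = step_amp c k"
    using evol_amp_nonzero_cases[OF c] by metis
  obtain w p q1 s where c_eq: "c = (w, p, q1, s)" by (cases c) auto
  obtain q \<omega> where k_eq: "k = (q, \<omega>)" by (cases k) auto
  note c_props = config_props[OF c[unfolded c_eq]]
  have "q \<in> Q" "\<omega> \<in> lists (delta_set T)" using k by (auto simp: k_eq targets_def short_words_def)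
  then show ?thesis
    using k(2) norm_reduced_trans_le[OF c_props(3,5,6)] by (simp add: c_eq k_eq)
qed simp

lemma evol_amp_sparse_matrix: "sparse_matrix Conf amp sparsity"
proof
  fix c c' assume c: "c \<in> Conf"
  show "amp c c' \<noteq> 0 \<Longrightarrow> c' \<in> Conf"
    using evol_amp_nonzero_cases[OF c] step_in_configs[OF c] by metis
  have row: "{c'. amp c c' \<noteq> 0} \<subseteq> step c ` targets"
    using evol_amp_nonzero_cases[OF c] by blast
  then show "finite {c'. amp c c' \<noteq> 0}"
    using finite_targets finite_subset by blast
  have "card {c'. amp c c' \<noteq> 0} \<le> card targets"
    using row finite_targets card_image_le card_mono finite_imageI le_trans by metis
  then show "card {c'. amp c c' \<noteq> 0} \<le> sparsity" by (simp add: sparsity_def)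
  show "cmod (amp c c') \<le> 1" using norm_evol_amp_le[OF c] .
next
  fix c' assume "c' \<in> Conf"
  have col: "{c \<in> Conf. amp c c' \<noteq> 0} \<subseteq> pred_candidates c'"
    using pred_candidates_complete by blast
  then show "finite {c \<in> Conf. amp c c' \<noteq> 0}"
    using finite_pred_candidates finite_subset by blast
  have "card {c \<in> Conf. amp c c' \<noteq> 0} \<le> card (pred_candidates c')"
    using col finite_pred_candidates by (rule card_mono[rotated])
  then show "card {c \<in> Conf. amp c c' \<noteq> 0} \<le> sparsity"
    using card_pred_candidates_le[of c'] unfolding sparsity_def by linarith
qed

end

sublocale simplified_qpa \<subseteq> evol: sparse_matrix "configs Q Sig T" "evol_amp Q T \<delta>" sparsity
  by (rule evol_amp_sparse_matrix)

context simplified_qpa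
begin

lemma evol_op_eq_mat_op: "evol_op Q Sig T \<delta> = evol.mat_op"
  by (intro ext) (simp add: evol_op_def evol.mat_op_def)

subsection \<open>Inner products of rows\<close>

lemma row_ip_eq_double_sum:
  assumes c1: "c1 \<in> Conf" and c2: "c2 \<in> Conf"
  shows "evol.row_ip c1 c2 = (\<Sum>k1\<in>targets. \<Sum>k2\<in>targets.
           if step c1 k1 = step c2 k2 then cnj (step_amp c1 k1) * step_amp c2 k2 else 0)"
proof -
  have "evol.row_supp c1 \<subseteq> step c1 ` targets"
    using evol_amp_nonzero_cases[OF c1] by (force simp: evol.row_supp_def)
  then have "evol.row_ip c1 c2 = (\<Sum>c'\<in>step c1 ` targets \<inter> Conf. cnj (amp c1 c') * amp c2 c')"
    using finite_targets evol.row_supp_subset[OF c1] by (intro evol.row_ip_eq_sum c1) auto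
  also have "\<dots> = (\<Sum>c'\<in>step c1 ` targets. cnj (amp c1 c') * amp c2 c')"
    using finite_targets evol.row_in_carrier[OF c1] by (intro sum.mono_neutral_left) auto
  also have "\<dots> = (\<Sum>k1\<in>targets. cnj (step_amp c1 k1) * amp c2 (step c1 k1))"
    by (subst sum.reindex) (auto simp: inj_on_def evol_amp_step[OF c1] dest: step_inj)
  also have "\<dots> = (\<Sum>k1\<in>targets. \<Sum>k2\<in>targets.
           if step c1 k1 = step c2 k2 then cnj (step_amp c1 k1) * step_amp c2 k2 else 0)"
    by (simp add: evol_amp_eq_sum[OF c2] sum_distrib_left if_distrib eq_commute cong: if_cong)
  finally show ?thesis .
qed

lemma row_ip_eq_0_if_cells_differ:
  assumes c1: "(w1, p1, q1, s1) \<in> Conf" and c2: "(w2, p2, q2, s2) \<in> Conf"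
    and "(w1, p1) \<noteq> (w2, p2)"
  shows "evol.row_ip (w1, p1, q1, s1) (w2, p2, q2, s2) = 0"
proof -
  have "step (w1, p1, q1, s1) k1 \<noteq> step (w2, p2, q2, s2) k2" for k1 k2
  proof
    assume eq: "step (w1, p1, q1, s1) k1 = step (w2, p2, q2, s2) k2"
    obtain qa \<omega>1 qb \<omega>2 where k: "k1 = (qa, \<omega>1)" "k2 = (qb, \<omega>2)" by (cases k1, cases k2) auto
    then have "w1 = w2" "move w1 p1 (D qa) = move w1 p2 (D qa)" using eq by auto
    then have "p1 = p2"
      using move_back_move config_props(2)[OF c1] config_props(2)[OF c2] by metis
    then show False using assms(3) \<open>w1 = w2\<close> by simp
  qed
  then show ?thesis using row_ip_eq_double_sum[OF c1 c2] by simp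
qed

text \<open>Contribution of one target state to the inner product of the rows of two configurations
  in the same cell whose stacks are \<open>b\<^sub>1\<close> and \<open>b\<^sub>2\<close> below the head.\<close>

definition overlap ::
  "'t option list \<Rightarrow> 't option list \<Rightarrow> ('t option list \<Rightarrow> complex) \<Rightarrow> ('t option list \<Rightarrow> complex) \<Rightarrow> complex"
  where "overlap b1 b2 f g =
    (\<Sum>\<omega>1\<in>short_words. \<Sum>\<omega>2\<in>short_words. if b1 @ \<omega>1 = b2 @ \<omega>2 then cnj (f \<omega>1) * g \<omega>2 else 0)"

lemma row_ip_same_cell:
  assumes c1: "(w, p, q1, s1) \<in> Conf" and c2: "(w, p, q2, s2) \<in> Conf"
  shows "evol.row_ip (w, p, q1, s1) (w, p, q2, s2) = (\<Sum>q\<in>Q.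
     overlap (butlast s1) (butlast s2) (\<phi> q1 (tape w ! p) (last s1) q) (\<phi> q2 (tape w ! p) (last s2) q))"
proof -
  let ?f = "\<lambda>q. \<phi> q1 (tape w ! p) (last s1) q" and ?g = "\<lambda>q. \<phi> q2 (tape w ! p) (last s2) q"
  let ?F = "\<lambda>qa \<omega>1 qb \<omega>2. if qa = qb \<and> butlast s1 @ \<omega>1 = butlast s2 @ \<omega>2
     then cnj (?f qa \<omega>1) * ?g qb \<omega>2 else 0"
  have "evol.row_ip (w, p, q1, s1) (w, p, q2, s2)
      = (\<Sum>k1\<in>Q \<times> short_words. \<Sum>k2\<in>Q \<times> short_words. ?F (fst k1) (snd k1) (fst k2) (snd k2))"
    unfolding row_ip_eq_double_sum[OF c1 c2] targets_def
    by (intro sum.cong refl) (auto simp: case_prod_beta)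
  also have "\<dots> = (\<Sum>qa\<in>Q. \<Sum>\<omega>1\<in>short_words. \<Sum>qb\<in>Q. \<Sum>\<omega>2\<in>short_words. ?F qa \<omega>1 qb \<omega>2)"
    by (simp only: sum.cartesian_product' fst_conv snd_conv)
  also have "\<dots> = (\<Sum>qa\<in>Q. \<Sum>\<omega>1\<in>short_words. \<Sum>\<omega>2\<in>short_words. \<Sum>qb\<in>Q. ?F qa \<omega>1 qb \<omega>2)"
    by (intro sum.cong refl sum.swap)
  also have "\<dots> = (\<Sum>q\<in>Q. overlap (butlast s1) (butlast s2) (?f q) (?g q))"
    unfolding overlap_def using finite_Q
    by (intro sum.cong refl) (simp add: if_distrib[symmetric] cong: if_cong)
  finally show ?thesis .
qed

lemma overlap_append:
  "overlap (b @ v) b f g = (\<Sum>\<omega>\<in>{\<omega> \<in> short_words. v @ \<omega> \<in> short_words}. cnj (f \<omega>) * g (v @ \<omega>))"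
proof -
  have "overlap (b @ v) b f g
      = (\<Sum>\<omega>1\<in>short_words. \<Sum>\<omega>2\<in>short_words. if \<omega>2 = v @ \<omega>1 then cnj (f \<omega>1) * g \<omega>2 else 0)"
    unfolding overlap_def by (intro sum.cong refl) auto
  also have "\<dots> = (\<Sum>\<omega>\<in>short_words. if v @ \<omega> \<in> short_words then cnj (f \<omega>) * g (v @ \<omega>) else 0)"
    using finite_short_words by (simp add: sum.delta' cong: if_cong)
  finally show ?thesis using finite_short_words by (simp add: sum.inter_filter)
qed

lemma overlap_same: "overlap b b f g = (\<Sum>\<omega>\<in>short_words. cnj (f \<omega>) * g \<omega>)"
  using overlap_append[of b "[]"] by simp

lemma overlap_snoc:
  assumes t: "t \<in> delta_set T"
  shows "overlap (b @ [t]) b f g = cnj (f []) * g [t] + (\<Sum>\<tau>\<in>delta_set T. cnj (f [\<tau>]) * g [t, \<tau>])"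
proof -
  have "{\<omega> \<in> short_words. [t] @ \<omega> \<in> short_words} = insert [] ((\<lambda>\<tau>. [\<tau>]) ` delta_set T)"
    using t by (auto simp: short_words_def length_Suc_conv image_iff le_Suc_eq numeral_2_eq_2)
  moreover have "(\<Sum>\<omega>\<in>(\<lambda>\<tau>. [\<tau>]) ` delta_set T. cnj (f \<omega>) * g (t # \<omega>))
      = (\<Sum>\<tau>\<in>delta_set T. cnj (f [\<tau>]) * g [t, \<tau>])"
    by (subst sum.reindex) (auto simp: inj_on_def)
  moreover have "[] \<notin> (\<lambda>\<tau>. [\<tau>]) ` delta_set T" by blast
  ultimately show ?thesis
    using overlap_append[of b "[t]"] finite_delta_set by simp
qed

lemma overlap_snoc2:
  assumes "t \<in> delta_set T" "u \<in> delta_set T"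
  shows "overlap (b @ [t, u]) b f g = cnj (f []) * g [t, u]"
proof -
  have "{\<omega> \<in> short_words. [t, u] @ \<omega> \<in> short_words} = {[]}"
    using assms by (auto simp: short_words_def)
  then show ?thesis using overlap_append[of b "[t, u]"] by simp
qed

lemma overlap_eq_0:
  "(\<And>\<omega>1 \<omega>2. \<omega>1 \<in> short_words \<Longrightarrow> \<omega>2 \<in> short_words \<Longrightarrow> b1 @ \<omega>1 \<noteq> b2 @ \<omega>2) \<Longrightarrow> overlap b1 b2 f g = 0"
  unfolding overlap_def by (simp add: sum.neutral)

text \<open>Conditions (1)--(4) of the theorem; the two sums of (4) are \<open>overlap1_sum\<close> and \<open>overlap2_sum\<close>.\<close>

definition "norm_cond \<longleftrightarrow> (\<forall>q1\<in>Q. \<forall>\<sigma>1\<in>gamma_set Sig. \<forall>\<tau>1\<in>delta_set T.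
    infsum (\<lambda>(q, \<omega>). (cmod (\<phi> q1 \<sigma>1 \<tau>1 q \<omega>))\<^sup>2) (Q \<times> lists (delta_set T)) = 1)"

definition "orth_cond \<longleftrightarrow> (\<forall>q1\<in>Q. \<forall>q2\<in>Q. \<forall>\<sigma>1\<in>gamma_set Sig. \<forall>\<tau>1\<in>delta_set T. \<forall>\<tau>2\<in>delta_set T.
    (q1, \<tau>1) \<noteq> (q2, \<tau>2) \<longrightarrow>
    infsum (\<lambda>(q, \<omega>). cnj (\<phi> q1 \<sigma>1 \<tau>1 q \<omega>) * \<phi> q2 \<sigma>1 \<tau>2 q \<omega>) (Q \<times> lists (delta_set T)) = 0)"

definition "col_cond \<longleftrightarrow> (\<forall>q1\<in>Q. \<forall>\<sigma>1\<in>gamma_set Sig. \<forall>\<tau>1\<in>delta_set T. \<forall>\<tau>2\<in>delta_set T.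
    infsum (\<lambda>(q, \<tau>, \<omega>). (cmod (\<phi> q \<sigma>1 \<tau> q1 \<omega>))\<^sup>2) (Q \<times> delta_set T \<times> {[], [\<tau>2], [\<tau>1, \<tau>2]}) = 1)"

definition "overlap1_sum q1 q2 \<sigma>1 \<tau>1 \<tau>2 \<tau>3 =
    infsum (\<lambda>(q, \<tau>). cnj (\<phi> q1 \<sigma>1 \<tau>1 q [\<tau>]) * \<phi> q2 \<sigma>1 \<tau>2 q [\<tau>3, \<tau>]) (Q \<times> delta_set T)
      + (\<Sum>q\<in>Q. cnj (\<phi> q1 \<sigma>1 \<tau>1 q []) * \<phi> q2 \<sigma>1 \<tau>2 q [\<tau>3])"

definition "overlap2_sum q1 q2 \<sigma>1 \<tau>1 \<tau>2 \<tau>3 = (\<Sum>q\<in>Q. cnj (\<phi> q1 \<sigma>1 \<tau>1 q []) * \<phi> q2 \<sigma>1 \<tau>2 q [\<tau>2, \<tau>3])"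

definition "overlap_cond \<longleftrightarrow>
  (\<forall>q1\<in>Q. \<forall>q2\<in>Q. \<forall>\<sigma>1\<in>gamma_set Sig. \<forall>\<tau>1\<in>delta_set T. \<forall>\<tau>2\<in>delta_set T. \<forall>\<tau>3\<in>delta_set T.
    overlap1_sum q1 q2 \<sigma>1 \<tau>1 \<tau>2 \<tau>3 = 0 \<and> overlap2_sum q1 q2 \<sigma>1 \<tau>1 \<tau>2 \<tau>3 = 0)"

definition "local_ip q1 q2 \<sigma> \<tau>1 \<tau>2 = (\<Sum>q\<in>Q. \<Sum>\<omega>\<in>short_words. cnj (\<phi> q1 \<sigma> \<tau>1 q \<omega>) * \<phi> q2 \<sigma> \<tau>2 q \<omega>)"

lemma infsum_reduced_trans_eq_sum:
  assumes "q1 \<in> Q" "\<sigma> \<in> gamma_set Sig" "\<tau>1 \<in> delta_set T"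
    and "\<And>q \<omega>. \<phi> q1 \<sigma> \<tau>1 q \<omega> = 0 \<Longrightarrow> F q \<omega> = 0"
  shows "infsum (\<lambda>(q, \<omega>). F q \<omega>) (Q \<times> lists (delta_set T)) = (\<Sum>q\<in>Q. \<Sum>\<omega>\<in>short_words. F q \<omega>)"
proof -
  have "infsum (\<lambda>(q, \<omega>). F q \<omega>) (Q \<times> lists (delta_set T)) = (\<Sum>(q, \<omega>)\<in>Q \<times> short_words. F q \<omega>)"
  proof (rule infsum_finite_support)
    fix x assume "x \<in> Q \<times> lists (delta_set T)" "x \<notin> Q \<times> short_words"
    then obtain q \<omega> where "x = (q, \<omega>)" "q \<in> Q" "\<omega> \<in> lists (delta_set T)" "\<omega> \<notin> short_words"
      by auto
    then show "(\<lambda>(q, \<omega>). F q \<omega>) x = 0" using assms reduced_trans_eq_0_if_long by simp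
  qed (use finite_Q finite_short_words in \<open>auto simp: short_words_def\<close>)
  then show ?thesis by (simp add: sum.cartesian_product')
qed

lemma local_ip_eq_infsum:
  assumes "q1 \<in> Q" "\<sigma> \<in> gamma_set Sig" "\<tau>1 \<in> delta_set T"
  shows "infsum (\<lambda>(q, \<omega>). cnj (\<phi> q1 \<sigma> \<tau>1 q \<omega>) * \<phi> q2 \<sigma> \<tau>2 q \<omega>) (Q \<times> lists (delta_set T))
    = local_ip q1 q2 \<sigma> \<tau>1 \<tau>2"
  unfolding local_ip_def by (rule infsum_reduced_trans_eq_sum[OF assms]) simp

lemma local_ip_self_eq_infsum:
  assumes "q1 \<in> Q" "\<sigma> \<in> gamma_set Sig" "\<tau>1 \<in> delta_set T"
  shows "of_real (infsum (\<lambda>(q, \<omega>). (cmod (\<phi> q1 \<sigma> \<tau>1 q \<omega>))\<^sup>2) (Q \<times> lists (delta_set T)))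
    = local_ip q1 q1 \<sigma> \<tau>1 \<tau>1"
proof -
  have "infsum (\<lambda>(q, \<omega>). (cmod (\<phi> q1 \<sigma> \<tau>1 q \<omega>))\<^sup>2) (Q \<times> lists (delta_set T))
      = (\<Sum>q\<in>Q. \<Sum>\<omega>\<in>short_words. (cmod (\<phi> q1 \<sigma> \<tau>1 q \<omega>))\<^sup>2)"
    by (rule infsum_reduced_trans_eq_sum[OF assms]) simp
  then show ?thesis by (simp add: local_ip_def cnj_mult_self)
qed

lemma sum_overlap_same: "(\<Sum>q\<in>Q. overlap b b (\<phi> q1 \<sigma> \<tau>1 q) (\<phi> q2 \<sigma> \<tau>2 q)) = local_ip q1 q2 \<sigma> \<tau>1 \<tau>2"
  by (simp add: overlap_same local_ip_def)

lemma sum_overlap_snoc: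
  "\<tau>3 \<in> delta_set T \<Longrightarrow>
    (\<Sum>q\<in>Q. overlap (b @ [\<tau>3]) b (\<phi> q1 \<sigma> \<tau>1 q) (\<phi> q2 \<sigma> \<tau>2 q)) = overlap1_sum q1 q2 \<sigma> \<tau>1 \<tau>2 \<tau>3"
  using finite_Q finite_delta_set
  by (simp add: overlap_snoc overlap1_sum_def sum.distrib sum.cartesian_product' add.commute)

lemma sum_overlap_snoc2:
  "t \<in> delta_set T \<Longrightarrow> u \<in> delta_set T \<Longrightarrow>
    (\<Sum>q\<in>Q. overlap (b @ [t, u]) b (\<phi> q1 \<sigma> \<tau>1 q) (\<phi> q2 \<sigma> \<tau>2 q))
      = (\<Sum>q\<in>Q. cnj (\<phi> q1 \<sigma> \<tau>1 q []) * \<phi> q2 \<sigma> \<tau>2 q [t, u])"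
  by (simp add: overlap_snoc2)

lemma reduced_trans_prod_eq_0:
  assumes "q1 \<in> Q" "q2 \<in> Q" "q \<in> Q" "\<sigma> \<in> gamma_set Sig" "\<tau>1 \<in> delta_set T" "\<tau>2 \<in> delta_set T"
    "\<omega>1 \<in> lists (delta_set T)" "\<omega>2 \<in> lists (delta_set T)"
    and "\<not> (legal_push T \<tau>1 \<omega>1 \<and> legal_push T \<tau>2 \<omega>2)"
  shows "cnj (\<phi> q1 \<sigma> \<tau>1 q \<omega>1) * \<phi> q2 \<sigma> \<tau>2 q \<omega>2 = 0"
  using legal_push_reduced_trans assms by fastforce

text \<open>The conditions need not be checked for combinations of stack heads that no pair of
  configurations realizes: for those, the sums vanish by the constraints on \<open>\<delta>\<close>.\<close>

lemma local_ip_eq_0_if_bottom_mismatch: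
  assumes "q1 \<in> Q" "q2 \<in> Q" "\<sigma> \<in> gamma_set Sig" "\<tau>1 \<in> delta_set T" "\<tau>2 \<in> delta_set T"
    and "(\<tau>1 = None) \<noteq> (\<tau>2 = None)"
  shows "local_ip q1 q2 \<sigma> \<tau>1 \<tau>2 = 0"
proof -
  have "\<not> (legal_push T \<tau>1 \<omega> \<and> legal_push T \<tau>2 \<omega>)" for \<omega>
    using legal_push_bottom assms(6) by blast
  then show ?thesis
    unfolding local_ip_def
    by (intro sum.neutral ballI reduced_trans_prod_eq_0) (use assms in \<open>auto simp: short_words_def\<close>)
qed

lemma overlap1_sum_eq_0_if_unrealizable:
  assumes "q1 \<in> Q" "q2 \<in> Q" "\<sigma> \<in> gamma_set Sig" "\<tau>1 \<in> delta_set T" "\<tau>2 \<in> delta_set T" "\<tau>3 \<in> delta_set T"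
    and "\<not> (\<tau>1 \<noteq> None \<and> (\<tau>3 = None \<longleftrightarrow> \<tau>2 = None))"
  shows "overlap1_sum q1 q2 \<sigma> \<tau>1 \<tau>2 \<tau>3 = 0"
proof -
  have push1: "cnj (\<phi> q1 \<sigma> \<tau>1 q [\<tau>]) * \<phi> q2 \<sigma> \<tau>2 q [\<tau>3, \<tau>] = 0"
    if "q \<in> Q" "\<tau> \<in> delta_set T" for q \<tau>
    using assms that
    by (intro reduced_trans_prod_eq_0) (auto simp: legal_push_single legal_push_pair)
  have push0: "cnj (\<phi> q1 \<sigma> \<tau>1 q []) * \<phi> q2 \<sigma> \<tau>2 q [\<tau>3] = 0" if "q \<in> Q" for q
    using assms that
    by (intro reduced_trans_prod_eq_0) (auto simp: legal_push_Nil legal_push_single)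
  show ?thesis
    unfolding overlap1_sum_def using finite_Q finite_delta_set
    by (simp add: sum.cartesian_product' push0 push1)
qed

lemma overlap2_sum_eq_0_if_unrealizable:
  assumes "q1 \<in> Q" "q2 \<in> Q" "\<sigma> \<in> gamma_set Sig" "\<tau>1 \<in> delta_set T" "\<tau>2 \<in> delta_set T" "\<tau>3 \<in> delta_set T"
    and "\<not> (\<tau>1 \<noteq> None \<and> \<tau>3 \<noteq> None)"
  shows "overlap2_sum q1 q2 \<sigma> \<tau>1 \<tau>2 \<tau>3 = 0"
  unfolding overlap2_sum_def using assms
  by (auto simp: legal_push_Nil legal_push_pair intro!: sum.neutral reduced_trans_prod_eq_0)

lemma sum_push_pair_eq_0_if_not_head:
  assumes "q1 \<in> Q" "q2 \<in> Q" "\<sigma> \<in> gamma_set Sig" "\<tau>1 \<in> delta_set T" "\<tau>2 \<in> delta_set T"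
    "t \<in> delta_set T" "u \<in> delta_set T" "t \<noteq> \<tau>2"
  shows "(\<Sum>q\<in>Q. cnj (\<phi> q1 \<sigma> \<tau>1 q []) * \<phi> q2 \<sigma> \<tau>2 q [t, u]) = 0"
  using assms by (auto simp: legal_push_pair intro!: sum.neutral reduced_trans_prod_eq_0)

lemma sum_overlap_snoc2_eq_0:
  assumes cond: overlap_cond
    and "q1 \<in> Q" "q2 \<in> Q" "\<sigma> \<in> gamma_set Sig" "\<tau>1 \<in> delta_set T" "\<tau>2 \<in> delta_set T"
    and tu: "t \<in> delta_set T" "u \<in> delta_set T"
  shows "(\<Sum>q\<in>Q. overlap (b @ [t, u]) b (\<phi> q1 \<sigma> \<tau>1 q) (\<phi> q2 \<sigma> \<tau>2 q)) = 0"
proof (cases "t = \<tau>2")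
  case True
  have "overlap2_sum q1 q2 \<sigma> \<tau>1 \<tau>2 u = 0"
    using cond assms(2-6) tu unfolding overlap_cond_def by blast
  then show ?thesis unfolding sum_overlap_snoc2[OF tu] by (simp add: True overlap2_sum_def)
next
  case False
  then show ?thesis using sum_push_pair_eq_0_if_not_head[OF assms(2-6) tu] by (simp add: sum_overlap_snoc2[OF tu])
qed

lemma row_ip_eq_0_if_longer:
  assumes cond: overlap_cond and c1: "(w, p, q1, s1) \<in> Conf" and c2: "(w, p, q2, s2) \<in> Conf"
    and longer: "length s2 < length s1"
  shows "evol.row_ip (w, p, q1, s1) (w, p, q2, s2) = 0"
proof -
  note c1_props = config_props[OF c1] and c2_props = config_props[OF c2]
  define b1 b2 where "b1 = butlast s1" and "b2 = butlast s2"
  have row_ip: "evol.row_ip (w, p, q1, s1) (w, p, q2, s2)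
      = (\<Sum>q\<in>Q. overlap b1 b2 (\<phi> q1 (tape w ! p) (last s1) q) (\<phi> q2 (tape w ! p) (last s2) q))"
    unfolding row_ip_same_cell[OF c1 c2] b1_def b2_def ..
  have b1_in: "set b1 \<subseteq> delta_set T"
    using Z0T_star_in_lists[OF c1_props(4)] by (auto simp: b1_def dest: in_set_butlastD)
  have "0 < length s2" using c2_props(4) by (simp add: Z0T_star_def)
  then have "length b2 < length b1" using longer unfolding b1_def b2_def length_butlast by linarith
  then have "(\<exists>t. b1 = b2 @ [t]) \<or> (\<exists>t u. b1 = b2 @ [t, u]) \<or>
      (\<forall>\<omega>1 \<omega>2. \<omega>2 \<in> short_words \<longrightarrow> b1 @ \<omega>1 \<noteq> b2 @ \<omega>2)"
    using append_eq_append_longer_cases[of b1 _ b2] by (auto simp: short_words_def)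
  then consider t where "b1 = b2 @ [t]" | t u where "b1 = b2 @ [t, u]"
    | "\<And>\<omega>1 \<omega>2. \<omega>2 \<in> short_words \<Longrightarrow> b1 @ \<omega>1 \<noteq> b2 @ \<omega>2"
    by blast
  then show ?thesis
  proof cases
    case (1 t)
    then have "t \<in> delta_set T" using b1_in by auto
    then have "overlap1_sum q1 q2 (tape w ! p) (last s1) (last s2) t = 0"
      using cond c1_props c2_props unfolding overlap_cond_def by blast
    then show ?thesis using \<open>t \<in> delta_set T\<close> by (simp add: row_ip 1 sum_overlap_snoc)
  next
    case (2 t u)
    then have "t \<in> delta_set T" "u \<in> delta_set T" using b1_in by auto
    then show ?thesis
      using sum_overlap_snoc2_eq_0[OF cond c1_props(3) c2_props(3) c1_props(5,6) c2_props(6)]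
      by (simp add: row_ip 2)
  next
    case 3
    then show ?thesis by (simp add: row_ip overlap_eq_0)
  qed
qed

lemma row_ip_same_length:
  assumes norm: norm_cond and orth: orth_cond
    and c1: "(w, p, q1, s1) \<in> Conf" and c2: "(w, p, q2, s2) \<in> Conf" and len: "length s1 = length s2"
  shows "evol.row_ip (w, p, q1, s1) (w, p, q2, s2) = (if (q1, s1) = (q2, s2) then 1 else 0)"
proof (cases "butlast s1 = butlast s2")
  case False
  then have "overlap (butlast s1) (butlast s2) f g = 0" for f g
    using len by (intro overlap_eq_0) (auto simp: append_eq_append_conv)
  then show ?thesis using False by (auto simp: row_ip_same_cell[OF c1 c2])
next
  case True
  note c1_props = config_props[OF c1] and c2_props = config_props[OF c2]
  define \<sigma> where "\<sigma> = tape w ! p"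
  have row_ip: "evol.row_ip (w, p, q1, s1) (w, p, q2, s2) = local_ip q1 q2 \<sigma> (last s1) (last s2)"
    unfolding row_ip_same_cell[OF c1 c2] True sum_overlap_same \<sigma>_def ..
  show ?thesis
  proof (cases "(q1, last s1) = (q2, last s2)")
    case same: True
    then have "q1 = q2" "last s1 = last s2" by simp_all
    then have "(q1, s1) = (q2, s2)" using True c1_props(7) c2_props(7) by metis
    moreover have "local_ip q1 q1 \<sigma> (last s1) (last s1) = 1"
      using local_ip_self_eq_infsum[OF c1_props(3,5,6)] norm c1_props(3,5,6)
      unfolding norm_cond_def \<sigma>_def by simp
    ultimately show ?thesis using same row_ip by simp
  next
    case False
    then have "infsum (\<lambda>(q, \<omega>). cnj (\<phi> q1 \<sigma> (last s1) q \<omega>) * \<phi> q2 \<sigma> (last s2) q \<omega>)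
        (Q \<times> lists (delta_set T)) = 0"
      using orth c1_props(3,5,6) c2_props(3,6) unfolding orth_cond_def \<sigma>_def by blast
    then have "local_ip q1 q2 \<sigma> (last s1) (last s2) = 0"
      using local_ip_eq_infsum[OF c1_props(3,5,6)] by (simp add: \<sigma>_def)
    then show ?thesis using False row_ip by auto
  qed
qed

lemma orthonormal_rows_if_conds:
  assumes norm_cond orth_cond overlap_cond
  shows evol.orthonormal_rows
  unfolding evol.orthonormal_rows_def
proof (intro ballI)
  fix c1 c2 assume c1: "c1 \<in> Conf" and c2: "c2 \<in> Conf"
  obtain w1 p1 q1 s1 where c1_eq: "c1 = (w1, p1, q1, s1)" by (cases c1) auto
  obtain w2 p2 q2 s2 where c2_eq: "c2 = (w2, p2, q2, s2)" by (cases c2) auto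
  show "evol.row_ip c1 c2 = (if c1 = c2 then 1 else 0)"
  proof (cases "(w1, p1) = (w2, p2)")
    case False
    then show ?thesis using row_ip_eq_0_if_cells_differ c1 c2 by (auto simp: c1_eq c2_eq)
  next
    case True
    then have c1': "(w1, p1, q1, s1) \<in> Conf" and c2': "(w1, p1, q2, s2) \<in> Conf"
      using c1 c2 by (auto simp: c1_eq c2_eq)
    consider "length s2 < length s1" | "length s1 < length s2" | "length s1 = length s2" by linarith
    then show ?thesis
    proof cases
      case 1
      then show ?thesis using row_ip_eq_0_if_longer[OF assms(3) c1' c2'] True by (auto simp: c1_eq c2_eq)
    next
      case 2
      then show ?thesis
        using row_ip_eq_0_if_longer[OF assms(3) c2' c1'] evol.row_ip_cnj[of c1 c2] True
        by (auto simp: c1_eq c2_eq)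
    next
      case 3
      then show ?thesis using row_ip_same_length[OF assms(1,2) c1' c2'] True by (auto simp: c1_eq c2_eq)
    qed
  qed
qed

lemma norm_cond_if_orthonormal_rows:
  assumes orth: evol.orthonormal_rows
  shows norm_cond
  unfolding norm_cond_def
proof (intro ballI)
  fix q1 \<sigma>1 \<tau>1 assume q1: "q1 \<in> Q" and \<sigma>1: "\<sigma>1 \<in> gamma_set Sig" and \<tau>1: "\<tau>1 \<in> delta_set T"
  obtain w p where wp: "w \<in> lists Sig" "p < length w + 2" "tape w ! p = \<sigma>1"
    using ex_tape_position[OF \<sigma>1] by blast
  have c: "(w, p, q1, min_stack \<tau>1) \<in> Conf"
    using wp q1 min_stack_props[OF \<tau>1] by (simp add: configs_def)
  have "of_real (infsum (\<lambda>(q, \<omega>). (cmod (\<phi> q1 \<sigma>1 \<tau>1 q \<omega>))\<^sup>2) (Q \<times> lists (delta_set T)))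
      = local_ip q1 q1 \<sigma>1 \<tau>1 \<tau>1"
    by (rule local_ip_self_eq_infsum[OF q1 \<sigma>1 \<tau>1])
  also have "\<dots> = evol.row_ip (w, p, q1, min_stack \<tau>1) (w, p, q1, min_stack \<tau>1)"
    unfolding row_ip_same_cell[OF c c] sum_overlap_same min_stack_props[OF \<tau>1] wp(3) ..
  also have "\<dots> = 1" using orth c by (simp add: evol.orthonormal_rows_def)
  finally show "infsum (\<lambda>(q, \<omega>). (cmod (\<phi> q1 \<sigma>1 \<tau>1 q \<omega>))\<^sup>2) (Q \<times> lists (delta_set T)) = 1"
    by (metis of_real_eq_1_iff)
qed

lemma orth_cond_if_orthonormal_rows:
  assumes orth: evol.orthonormal_rows
  shows orth_cond
  unfolding orth_cond_def
proof (intro ballI impI)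
  fix q1 q2 \<sigma>1 \<tau>1 \<tau>2
  assume q: "q1 \<in> Q" "q2 \<in> Q" and \<sigma>1: "\<sigma>1 \<in> gamma_set Sig"
    and \<tau>: "\<tau>1 \<in> delta_set T" "\<tau>2 \<in> delta_set T" and ne: "(q1, \<tau>1) \<noteq> (q2, \<tau>2)"
  have "local_ip q1 q2 \<sigma>1 \<tau>1 \<tau>2 = 0"
  proof (cases "(\<tau>1 = None) = (\<tau>2 = None)")
    case False
    then show ?thesis using local_ip_eq_0_if_bottom_mismatch q \<sigma>1 \<tau> by blast
  next
    case True
    obtain w p where wp: "w \<in> lists Sig" "p < length w + 2" "tape w ! p = \<sigma>1"
      using ex_tape_position[OF \<sigma>1] by blast
    note stack1 = min_stack_props[OF \<tau>(1)] and stack2 = min_stack_props[OF \<tau>(2)]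
    have c1: "(w, p, q1, min_stack \<tau>1) \<in> Conf" and c2: "(w, p, q2, min_stack \<tau>2) \<in> Conf"
      using wp q stack1(1) stack2(1) by (simp_all add: configs_def)
    have "(w, p, q1, min_stack \<tau>1) \<noteq> (w, p, q2, min_stack \<tau>2)"
      using ne stack1(2) stack2(2) by auto
    then have "evol.row_ip (w, p, q1, min_stack \<tau>1) (w, p, q2, min_stack \<tau>2) = 0"
      using orth c1 c2 by (simp add: evol.orthonormal_rows_def)
    moreover have "butlast (min_stack \<tau>1) = butlast (min_stack \<tau>2)"
      using True stack1(3) stack2(3) by simp
    ultimately show ?thesis
      using stack1(2) stack2(2) wp(3) by (simp add: row_ip_same_cell[OF c1 c2] sum_overlap_same)
  qed
  then show "infsum (\<lambda>(q, \<omega>). cnj (\<phi> q1 \<sigma>1 \<tau>1 q \<omega>) * \<phi> q2 \<sigma>1 \<tau>2 q \<omega>) (Q \<times> lists (delta_set T)) = 0"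
    using local_ip_eq_infsum[OF q(1) \<sigma>1 \<tau>(1)] by simp
qed

lemma overlap1_sum_eq_0_if_orthonormal_rows:
  assumes orth: evol.orthonormal_rows
    and q: "q1 \<in> Q" "q2 \<in> Q" and \<sigma>1: "\<sigma>1 \<in> gamma_set Sig"
    and \<tau>: "\<tau>1 \<in> delta_set T" "\<tau>2 \<in> delta_set T" "\<tau>3 \<in> delta_set T"
  shows "overlap1_sum q1 q2 \<sigma>1 \<tau>1 \<tau>2 \<tau>3 = 0"
proof (cases "\<tau>1 \<noteq> None \<and> (\<tau>3 = None \<longleftrightarrow> \<tau>2 = None)")
  case False
  then show ?thesis using overlap1_sum_eq_0_if_unrealizable q \<sigma>1 \<tau> by blast
next
  case True
  obtain w p where wp: "w \<in> lists Sig" "p < length w + 2" "tape w ! p = \<sigma>1"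
    using ex_tape_position[OF \<sigma>1] by blast
  define b where "b = (if \<tau>3 = None then [] else [None :: 't option])"
  have "b @ [\<tau>3, \<tau>1] \<in> Z0T_star T" "b @ [\<tau>2] \<in> Z0T_star T"
    using True Some_in_delta_set \<tau> by (auto simp: b_def Z0T_star_def)
  then have c1: "(w, p, q1, b @ [\<tau>3, \<tau>1]) \<in> Conf" and c2: "(w, p, q2, b @ [\<tau>2]) \<in> Conf"
    using wp q by (simp_all add: configs_def)
  then have "evol.row_ip (w, p, q1, b @ [\<tau>3, \<tau>1]) (w, p, q2, b @ [\<tau>2]) = 0"
    using orth by (simp add: evol.orthonormal_rows_def)
  then show ?thesis
    using sum_overlap_snoc[OF \<tau>(3), of b q1 \<sigma>1 \<tau>1 q2 \<tau>2]
    by (simp add: row_ip_same_cell[OF c1 c2] wp(3) butlast_append)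
qed

lemma overlap2_sum_eq_0_if_orthonormal_rows:
  assumes orth: evol.orthonormal_rows
    and q: "q1 \<in> Q" "q2 \<in> Q" and \<sigma>1: "\<sigma>1 \<in> gamma_set Sig"
    and \<tau>: "\<tau>1 \<in> delta_set T" "\<tau>2 \<in> delta_set T" "\<tau>3 \<in> delta_set T"
  shows "overlap2_sum q1 q2 \<sigma>1 \<tau>1 \<tau>2 \<tau>3 = 0"
proof (cases "\<tau>1 \<noteq> None \<and> \<tau>3 \<noteq> None")
  case False
  then show ?thesis using overlap2_sum_eq_0_if_unrealizable q \<sigma>1 \<tau> by blast
next
  case True
  obtain w p where wp: "w \<in> lists Sig" "p < length w + 2" "tape w ! p = \<sigma>1"
    using ex_tape_position[OF \<sigma>1] by blast
  define b where "b = (if \<tau>2 = None then [] else [None :: 't option])"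
  have "b @ [\<tau>2, \<tau>3, \<tau>1] \<in> Z0T_star T" "b @ [\<tau>2] \<in> Z0T_star T"
    using True Some_in_delta_set \<tau> by (auto simp: b_def Z0T_star_def)
  then have c1: "(w, p, q1, b @ [\<tau>2, \<tau>3, \<tau>1]) \<in> Conf" and c2: "(w, p, q2, b @ [\<tau>2]) \<in> Conf"
    using wp q by (simp_all add: configs_def)
  then have "evol.row_ip (w, p, q1, b @ [\<tau>2, \<tau>3, \<tau>1]) (w, p, q2, b @ [\<tau>2]) = 0"
    using orth by (simp add: evol.orthonormal_rows_def)
  then show ?thesis
    using sum_overlap_snoc2[OF \<tau>(2,3), of b q1 \<sigma>1 \<tau>1 q2 \<tau>2]
    by (simp add: row_ip_same_cell[OF c1 c2] wp(3) butlast_append overlap2_sum_def)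
qed

lemma orthonormal_rows_iff: "evol.orthonormal_rows \<longleftrightarrow> norm_cond \<and> orth_cond \<and> overlap_cond"
proof
  assume orth: evol.orthonormal_rows
  have overlap_cond
    unfolding overlap_cond_def
    using overlap1_sum_eq_0_if_orthonormal_rows[OF orth] overlap2_sum_eq_0_if_orthonormal_rows[OF orth]
    by simp
  then show "norm_cond \<and> orth_cond \<and> overlap_cond"
    using norm_cond_if_orthonormal_rows[OF orth] orth_cond_if_orthonormal_rows[OF orth] by simp
qed (use orthonormal_rows_if_conds in blast)

subsection \<open>Norms of columns\<close>

lemma evol_amp_into_cases:
  assumes c': "(w, p', q1, s') \<in> Conf" and tops: "stack_tops s' \<tau>1 \<tau>2"
    and c: "c \<in> Conf" and nz: "amp c (w, p', q1, s') \<noteq> 0"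
  obtains q b \<tau> \<omega> where "c = (w, move_back w p' (D q1), q, b @ [\<tau>])" "s' = b @ \<omega>"
    "\<omega> \<in> {[], [\<tau>2], [\<tau>1, \<tau>2]}" "q \<in> Q" "\<tau> \<in> delta_set T"
    "amp c (w, p', q1, s') = \<phi> q (tape w ! move_back w p' (D q1)) \<tau> q1 \<omega>"
proof -
  obtain k where k: "k \<in> targets" "(w, p', q1, s') = step c k" "amp c (w, p', q1, s') = step_amp c k"
    using evol_amp_nonzero_cases[OF c nz] by blast
  obtain w0 p q s where c_eq: "c = (w0, p, q, s)" by (cases c) auto
  obtain q1' \<omega> where k_eq: "k = (q1', \<omega>)" by (cases k) auto
  note c_props = config_props[OF c[unfolded c_eq]]
  have eqs: "w0 = w" "q1' = q1" "s' = butlast s @ \<omega>" "move w p (D q1) = p'"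
    using k(2) by (auto simp: c_eq k_eq)
  then have "p = move_back w p' (D q1)" using move_back_move c_props(2) by metis
  moreover have "\<omega> \<in> {[], [\<tau>2], [\<tau>1, \<tau>2]}"
    using suffix_in_candidates[OF eqs(3) _ tops] k(1) by (simp add: k_eq targets_def short_words_def)
  ultimately show ?thesis
    using that[of q "butlast s" "last s" \<omega>] c_props k(3) eqs by (simp add: c_eq k_eq)
qed

lemma evol_amp_from_candidate:
  assumes c': "(w, p', q1, s') \<in> Conf" and tops: "stack_tops s' \<tau>1 \<tau>2"
    and \<tau>12: "\<tau>1 \<in> delta_set T" "\<tau>2 \<in> delta_set T" and q: "q \<in> Q" and \<tau>: "\<tau> \<in> delta_set T" and \<omega>: "\<omega> \<in> {[], [\<tau>2], [\<tau>1, \<tau>2]}"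
    and nz: "\<phi> q (tape w ! move_back w p' (D q1)) \<tau> q1 \<omega> \<noteq> 0"
  obtains b where "s' = b @ \<omega>" "(w, move_back w p' (D q1), q, b @ [\<tau>]) \<in> Conf"
    "amp (w, move_back w p' (D q1), q, b @ [\<tau>]) (w, p', q1, s') = \<phi> q (tape w ! move_back w p' (D q1)) \<tau> q1 \<omega>"
proof -
  note c'_props = config_props[OF c']
  define pp where "pp = move_back w p' (D q1)"
  have pp: "pp < length w + 2" using move_back_lt[OF c'_props(2)] by (simp add: pp_def)
  have \<omega>_in: "\<omega> \<in> lists (delta_set T)" using \<omega> \<tau>12 by auto
  have legal: "legal_push T \<tau> \<omega>"
    using legal_push_reduced_trans[OF q tape_nth_in_gamma_set[OF c'_props(1) pp] \<tau> c'_props(3) \<omega>_in] nz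
    by (simp add: pp_def)
  obtain b where b: "s' = b @ \<omega>" "b @ [\<tau>] \<in> Z0T_star T"
    using pushed_suffix[OF c'_props(4) tops legal \<tau> \<omega>] by blast
  have c: "(w, pp, q, b @ [\<tau>]) \<in> Conf" using c'_props(1) pp q b(2) by (simp add: configs_def)
  have target: "(q1, \<omega>) \<in> targets"
    using c'_props(3) legal \<omega>_in by (simp add: targets_def short_words_def legal_push_def)
  have "amp (w, pp, q, b @ [\<tau>]) (w, p', q1, s') = \<phi> q (tape w ! pp) \<tau> q1 \<omega>"
    using evol_amp_step[OF c target] move_move_back[OF c'_props(2)] b(1) by (simp add: pp_def)
  then show ?thesis using that b(1) c by (simp add: pp_def)
qed

lemma col_norm_eq:
  assumes c': "(w, p', q1, s') \<in> Conf" and tops: "stack_tops s' \<tau>1 \<tau>2"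
    and \<tau>12: "\<tau>1 \<in> delta_set T" "\<tau>2 \<in> delta_set T"
  shows "infsum (\<lambda>c. (cmod (amp c (w, p', q1, s')))\<^sup>2) Conf
    = infsum (\<lambda>(q, \<tau>, \<omega>). (cmod (\<phi> q (tape w ! move_back w p' (D q1)) \<tau> q1 \<omega>))\<^sup>2)
        (Q \<times> delta_set T \<times> {[], [\<tau>2], [\<tau>1, \<tau>2]})"
proof -
  define c0 where "c0 = (w, p', q1, s')"
  define pp where "pp = move_back w p' (D q1)"
  define W where "W = {[], [\<tau>2], [\<tau>1, \<tau>2]}"
  define h where "h = (\<lambda>(q, \<tau>, \<omega>). (cmod (\<phi> q (tape w ! pp) \<tau> q1 \<omega>))\<^sup>2)"
  define Pre where "Pre = {c \<in> Conf. amp c c0 \<noteq> 0}"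
  define N where "N = {(q, \<tau>, \<omega>) \<in> Q \<times> delta_set T \<times> W. \<phi> q (tape w ! pp) \<tau> q1 \<omega> \<noteq> 0}"
  define i where "i = (\<lambda>(q :: 'q, \<tau> :: 't option, \<omega> :: 't option list). (w, pp, q, take (length s' - length \<omega>) s' @ [\<tau>]))"
  define j where "j = (\<lambda>(w0 :: 'a list, p0 :: nat, q :: 'q, s :: 't option list). (q, last s, drop (length s - 1) s'))"
  have "infsum (\<lambda>c. (cmod (amp c c0))\<^sup>2) Conf = (\<Sum>c\<in>Pre. (cmod (amp c c0))\<^sup>2)"
    using evol.finite_col[of c0] c' by (intro infsum_finite_support) (auto simp: Pre_def c0_def)
  also have "\<dots> = sum h N"
  proof (rule sum.reindex_bij_witness[where i = i and j = j])
    fix c assume c_Pre: "c \<in> Pre"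
    then obtain q b \<tau> \<omega> where c: "c = (w, pp, q, b @ [\<tau>])" "s' = b @ \<omega>" "\<omega> \<in> W" "q \<in> Q" "\<tau> \<in> delta_set T"
      and amp: "amp c c0 = \<phi> q (tape w ! pp) \<tau> q1 \<omega>"
      using evol_amp_into_cases[OF c' tops] unfolding Pre_def c0_def pp_def W_def by blast
    show "i (j c) = c" "j c \<in> N" "h (j c) = (cmod (amp c c0))\<^sup>2"
      using c amp c_Pre by (auto simp: i_def j_def N_def h_def Pre_def)
  next
    fix x assume "x \<in> N"
    then obtain q \<tau> \<omega> where x: "x = (q, \<tau>, \<omega>)" "q \<in> Q" "\<tau> \<in> delta_set T" "\<omega> \<in> W"
      "\<phi> q (tape w ! pp) \<tau> q1 \<omega> \<noteq> 0"
      by (auto simp: N_def)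
    obtain b where "s' = b @ \<omega>" "(w, pp, q, b @ [\<tau>]) \<in> Conf"
      "amp (w, pp, q, b @ [\<tau>]) c0 = \<phi> q (tape w ! pp) \<tau> q1 \<omega>"
      using evol_amp_from_candidate[OF c' tops \<tau>12 x(2,3)] x(4,5) unfolding W_def pp_def c0_def by blast
    then show "i x \<in> Pre" "j (i x) = x"
      using x by (auto simp: i_def j_def Pre_def)
  qed
  also have "\<dots> = infsum h (Q \<times> delta_set T \<times> W)"
    using finite_Q finite_delta_set
    by (simp add: W_def, intro sum.mono_neutral_left) (auto simp: N_def h_def W_def)
  finally show ?thesis by (simp add: c0_def h_def pp_def W_def)
qed

lemma col_cond_if_normalized_cols:
  assumes norm: evol.normalized_cols
  shows col_cond
  unfolding col_cond_def
proof (intro ballI)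
  fix q1 \<sigma>1 \<tau>1 \<tau>2 assume q1: "q1 \<in> Q" and \<sigma>1: "\<sigma>1 \<in> gamma_set Sig"
    and \<tau>12: "\<tau>1 \<in> delta_set T" "\<tau>2 \<in> delta_set T"
  obtain w p where wp: "w \<in> lists Sig" "p < length w + 2" "tape w ! p = \<sigma>1"
    using ex_tape_position[OF \<sigma>1] by blast
  define p' where "p' = move w p (D q1)"
  define s' where "s' = (if \<tau>2 = None then [None] else if \<tau>1 = None then [None, \<tau>2] else [None, \<tau>1, \<tau>2])"
  have "p' < length w + 2" "move_back w p' (D q1) = p"
    using move_lt[OF wp(2)] move_back_move[OF wp(2)] by (simp_all add: p'_def)
  moreover have "s' \<in> Z0T_star T" "stack_tops s' \<tau>1 \<tau>2"
    using Some_in_delta_set \<tau>12 by (auto simp: s'_def Z0T_star_def stack_tops_def)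
  ultimately have c': "(w, p', q1, s') \<in> Conf" "move_back w p' (D q1) = p" "stack_tops s' \<tau>1 \<tau>2"
    using wp q1 by (simp_all add: configs_def)
  then show "infsum (\<lambda>(q, \<tau>, \<omega>). (cmod (\<phi> q \<sigma>1 \<tau> q1 \<omega>))\<^sup>2) (Q \<times> delta_set T \<times> {[], [\<tau>2], [\<tau>1, \<tau>2]}) = 1"
    using col_norm_eq[OF c'(1,3) \<tau>12] norm wp(3) by (simp add: evol.normalized_cols_def)
qed

lemma normalized_cols_if_col_cond:
  assumes cond: col_cond
  shows evol.normalized_cols
  unfolding evol.normalized_cols_def
proof
  fix c' assume "c' \<in> Conf"
  then obtain w p' q1 s' where c'_eq: "c' = (w, p', q1, s')" and c': "(w, p', q1, s') \<in> Conf"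
    by (cases c') auto
  note c'_props = config_props[OF c']
  define \<tau>1 where "\<tau>1 = (if 2 \<le> length s' then last (butlast s') else None)"
  have tops: "stack_tops s' \<tau>1 (last s')"
    using Z0T_star_short[OF c'_props(4)] by (auto simp: stack_tops_def \<tau>1_def)
  have "\<tau>1 \<in> delta_set T"
  proof (cases "2 \<le> length s'")
    case True
    then have "butlast s' \<noteq> []" by (cases s' rule: rev_cases) auto
    then have "last (butlast s') \<in> set s'" by (meson in_set_butlastD last_in_set)
    then show ?thesis using Z0T_star_in_lists[OF c'_props(4)] True by (auto simp: \<tau>1_def)
  qed (simp add: \<tau>1_def delta_set_def)
  moreover have "tape w ! move_back w p' (D q1) \<in> gamma_set Sig"
    using tape_nth_in_gamma_set[OF c'_props(1) move_back_lt[OF c'_props(2)]] .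
  ultimately show "infsum (\<lambda>c. (cmod (amp c c'))\<^sup>2) Conf = 1"
    using col_norm_eq[OF c' tops _ c'_props(6)] cond c'_props(3,6)
    unfolding col_cond_def c'_eq by simp
qed

lemma normalized_cols_iff: "evol.normalized_cols \<longleftrightarrow> col_cond"
  using col_cond_if_normalized_cols normalized_cols_if_col_cond by blast

end

theorem theorem2:
  fixes Q :: "'q set" and Sig :: "'a set" and T :: "'t set" and q0 :: 'q
    and Qa Qr :: "'q set" and \<delta> :: "('q, 'a, 't) trans" and D :: "'q \<Rightarrow> dir"
  assumes "qpa_structure Q Sig T q0 Qa Qr \<delta>"
    and "qpa_simplified Q Sig T \<delta> D"
  defines "\<phi> \<equiv> reduced_trans \<delta> D"
  shows "unitary_on (l2 (configs Q Sig T)) (ip (configs Q Sig T)) (evol_op Q Sig T \<delta>) \<longleftrightarrow>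
    ((\<forall>q1\<in>Q. \<forall>\<sigma>1\<in>gamma_set Sig. \<forall>\<tau>1\<in>delta_set T.
        infsum (\<lambda>(q, \<omega>). (cmod (\<phi> q1 \<sigma>1 \<tau>1 q \<omega>))\<^sup>2) (Q \<times> lists (delta_set T)) = 1) \<and>
     (\<forall>q1\<in>Q. \<forall>q2\<in>Q. \<forall>\<sigma>1\<in>gamma_set Sig. \<forall>\<tau>1\<in>delta_set T. \<forall>\<tau>2\<in>delta_set T.
        (q1, \<tau>1) \<noteq> (q2, \<tau>2) \<longrightarrow>
        infsum (\<lambda>(q, \<omega>). cnj (\<phi> q1 \<sigma>1 \<tau>1 q \<omega>) * \<phi> q2 \<sigma>1 \<tau>2 q \<omega>) (Q \<times> lists (delta_set T)) = 0) \<and>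
     (\<forall>q1\<in>Q. \<forall>\<sigma>1\<in>gamma_set Sig. \<forall>\<tau>1\<in>delta_set T. \<forall>\<tau>2\<in>delta_set T.
        infsum (\<lambda>(q, \<tau>, \<omega>). (cmod (\<phi> q \<sigma>1 \<tau> q1 \<omega>))\<^sup>2)
          (Q \<times> delta_set T \<times> {[], [\<tau>2], [\<tau>1, \<tau>2]}) = 1) \<and>
     (\<forall>q1\<in>Q. \<forall>q2\<in>Q. \<forall>\<sigma>1\<in>gamma_set Sig. \<forall>\<tau>1\<in>delta_set T. \<forall>\<tau>2\<in>delta_set T. \<forall>\<tau>3\<in>delta_set T.
        infsum (\<lambda>(q, \<tau>). cnj (\<phi> q1 \<sigma>1 \<tau>1 q [\<tau>]) * \<phi> q2 \<sigma>1 \<tau>2 q [\<tau>3, \<tau>]) (Q \<times> delta_set T)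
          + (\<Sum>q\<in>Q. cnj (\<phi> q1 \<sigma>1 \<tau>1 q []) * \<phi> q2 \<sigma>1 \<tau>2 q [\<tau>3]) = 0 \<and>
        (\<Sum>q\<in>Q. cnj (\<phi> q1 \<sigma>1 \<tau>1 q []) * \<phi> q2 \<sigma>1 \<tau>2 q [\<tau>2, \<tau>3]) = 0))"
proof -
  interpret simplified_qpa Q Sig T q0 Qa Qr \<delta> D
    using assms(1,2) by unfold_locales
  have "unitary_on (l2 (configs Q Sig T)) (ip (configs Q Sig T)) (evol_op Q Sig T \<delta>) \<longleftrightarrow>
      norm_cond \<and> orth_cond \<and> col_cond \<and> overlap_cond"
    unfolding evol_op_eq_mat_op evol.unitary_on_iff orthonormal_rows_iff normalized_cols_iff by blast
  then show ?thesis
    unfolding assms(3) norm_cond_def orth_cond_def col_cond_def overlap_cond_def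
      overlap1_sum_def overlap2_sum_def .
qed

end
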